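(* Let $A_0B_0C_0$ be a triangle, $P$ a fixed point, and $\{A_kB_kC_k\}_{k\ge 0}$ a chain of Miquel triangles with Miquel point $P$, all nondegenerate and with $P$ on none of their side lines. Then: (a) If $P$ is the first Brocard point of $A_0B_0C_0$, then $P$ is the first Brocard point of every $A_kB_kC_k$ and $A_0B_0C_0\sim A_kB_kC_k$ for all $k\ge 1$. (b) If $P$ is the second Brocard point of $A_0B_0C_0$, then $P$ is the second Brocard point of every $A_kB_kC_k$ and $A_0B_0C_0\sim A_kB_kC_k$ for all $k\ge 1$. (c) If $P$ is the circumcenter of $A_0B_0C_0$ or one of the points $S_{A_0},S_{B_0},S_{C_0}$, then $A_0B_0C_0\sim A_kB_kC_k$ for every $k\equiv 0\pmod 3$ and every $k\equiv 1\pmod 3$. (d) If $P$ is the orthocenter of $A_0B_0C_0$ or one of the points $M_{A_0},M_{B_0},M_{C_0}$, then $A_0B_0C_0\sim A_kB_kC_k$ for every $k\equiv 2\pmod 3$ and every $k\equiv 0\pmod 3$.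
   Context: Miquel triangle: given a triangle $ABC$ and a point $P$ not on the lines $BC,CA,AB$, a triangle $XYZ$ with $X$ on line $BC$, $Y$ on line $CA$, $Z$ on line $AB$ is a Miquel triangle of $P$ relative to $ABC$ if $P$ lies on the circles through $A,Y,Z$, through $B,Z,X$, and through $C,X,Y$. Chain: for each $k\ge 0$, $A_{k+1}\in$ line $B_kC_k$, $B_{k+1}\in$ line $C_kA_k$, $C_{k+1}\in$ line $A_kB_k$, and $A_{k+1}B_{k+1}C_{k+1}$ is a Miquel triangle of $P$ relative to $A_kB_kC_k$. "$\sim$" means similarity of triangles (as unlabeled triangles). First Brocard point of $ABC$: point $P$ with $\angle BAP=\angle CBP=\angle ACP$; second: $\angle PAC=\angle PBA=\angle PCB$. With $O$ the circumcenter of $ABC$: $S_A$ is the point where the ray from $A$ along the symmedian from $A$ (reflection of the median in the angle bisector) meets the arc $BC$ of the circle through $B,C,O$ containing $O$; $S_B,S_C$ analogously. $M_A$ (for $\angle A\ne 90^\circ$, $E$ the midpoint of $BC$): if $\angle A<90^\circ$, with $F$ the second intersection of line $AE$ with the circumcircle of $ABC$, $M_A$ is the point on segment $AE$ with $EM_A=EF$; if $\angle A>90^\circ$, with $F$ such that $ABFC$ is a parallelogram, $M_A$ is the second intersection of line $AE$ with the circumcircle of $FBC$; $M_B,M_C$ analogously. *)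

theory Defs
  imports "HOL-Analysis.Analysis"
begin

text \<open>Points of the Euclidean plane are modelled as complex numbers.\<close>

definition vangle :: "complex \<Rightarrow> complex \<Rightarrow> real" where
  "vangle u v = arccos (inner u v / (norm u * norm v))"

text \<open>ang X V Y is the (unoriented, in [0,pi]) angle XVY at vertex V.\<close>
definition ang :: "complex \<Rightarrow> complex \<Rightarrow> complex \<Rightarrow> real" where
  "ang X V Y = vangle (X - V) (Y - V)"

definition nondeg_triangle :: "complex \<Rightarrow> complex \<Rightarrow> complex \<Rightarrow> bool" where
  "nondeg_triangle A B C \<longleftrightarrow> \<not> collinear {A, B, C}"

definition on_line :: "complex \<Rightarrow> complex \<Rightarrow> complex \<Rightarrow> bool" where
  "on_line X U V \<longleftrightarrow> collinear {U, V, X}"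

definition on_circle3 :: "complex \<Rightarrow> complex \<Rightarrow> complex \<Rightarrow> complex \<Rightarrow> bool" where
  "on_circle3 P U V W \<longleftrightarrow> \<not> collinear {U, V, W} \<and>
     (\<exists>c. dist c U = dist c V \<and> dist c U = dist c W \<and> dist c U = dist c P)"

definition miquel_triangle ::
  "complex \<Rightarrow> complex \<Rightarrow> complex \<Rightarrow> complex \<Rightarrow> complex \<Rightarrow> complex \<Rightarrow> complex \<Rightarrow> bool" where
  "miquel_triangle P A B C X Y Z \<longleftrightarrow>
     on_line X B C \<and> on_line Y C A \<and> on_line Z A B \<and>
     on_circle3 P A Y Z \<and> on_circle3 P B Z X \<and> on_circle3 P C X Y"

text \<open>Labelled similarity (SSS, mirror images allowed), and similarity of
  unlabelled triangles (some relabelling of the vertices).\<close>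
definition sim_labelled ::
  "complex \<Rightarrow> complex \<Rightarrow> complex \<Rightarrow> complex \<Rightarrow> complex \<Rightarrow> complex \<Rightarrow> bool" where
  "sim_labelled A B C A' B' C' \<longleftrightarrow>
     (\<exists>k>0. dist A' B' = k * dist A B \<and> dist B' C' = k * dist B C \<and> dist C' A' = k * dist C A)"

definition tri_sim ::
  "complex \<Rightarrow> complex \<Rightarrow> complex \<Rightarrow> complex \<Rightarrow> complex \<Rightarrow> complex \<Rightarrow> bool" where
  "tri_sim A B C A' B' C' \<longleftrightarrow>
     sim_labelled A B C A' B' C' \<or> sim_labelled A B C A' C' B' \<or>
     sim_labelled A B C B' A' C' \<or> sim_labelled A B C B' C' A' \<or>
     sim_labelled A B C C' A' B' \<or> sim_labelled A B C C' B' A'"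

definition first_brocard :: "complex \<Rightarrow> complex \<Rightarrow> complex \<Rightarrow> complex \<Rightarrow> bool" where
  "first_brocard P A B C \<longleftrightarrow> P \<in> interior (convex hull {A, B, C}) \<and>
     ang B A P = ang C B P \<and> ang C B P = ang A C P"

definition second_brocard :: "complex \<Rightarrow> complex \<Rightarrow> complex \<Rightarrow> complex \<Rightarrow> bool" where
  "second_brocard P A B C \<longleftrightarrow> P \<in> interior (convex hull {A, B, C}) \<and>
     ang P A C = ang P B A \<and> ang P B A = ang P C B"

definition is_circumcenter :: "complex \<Rightarrow> complex \<Rightarrow> complex \<Rightarrow> complex \<Rightarrow> bool" where
  "is_circumcenter Oc A B C \<longleftrightarrow> dist Oc A = dist Oc B \<and> dist Oc B = dist Oc C"

definition is_orthocenter :: "complex \<Rightarrow> complex \<Rightarrow> complex \<Rightarrow> complex \<Rightarrow> bool" where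
  "is_orthocenter H A B C \<longleftrightarrow> inner (H - A) (B - C) = 0 \<and> inner (H - B) (C - A) = 0"

definition reflect_dir :: "complex \<Rightarrow> complex \<Rightarrow> complex" where
  "reflect_dir w x = (2 * inner x w / inner w w) *\<^sub>R w - x"

text \<open>Direction of the symmedian from A: the median direction reflected in the
  internal angle bisector at A.\<close>
definition symmedian_dir :: "complex \<Rightarrow> complex \<Rightarrow> complex \<Rightarrow> complex" where
  "symmedian_dir A B C =
     reflect_dir ((B - A) /\<^sub>R norm (B - A) + (C - A) /\<^sub>R norm (C - A)) ((B + C) / 2 - A)"

definition orient :: "complex \<Rightarrow> complex \<Rightarrow> complex \<Rightarrow> real" where
  "orient U V X = Im (cnj (V - U) * (X - U))"

text \<open>S is the point S_A of triangle ABC.  The arc BC containing Oc consists of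
  B, C and the points of the circle strictly on the same side of line BC as Oc.\<close>
definition is_S_point :: "complex \<Rightarrow> complex \<Rightarrow> complex \<Rightarrow> complex \<Rightarrow> bool" where
  "is_S_point S A B C \<longleftrightarrow>
     (\<exists>Oc. is_circumcenter Oc A B C \<and> \<not> collinear {B, C, Oc} \<and>
        (\<exists>t>0. S = A + t *\<^sub>R symmedian_dir A B C) \<and>
        on_circle3 S B C Oc \<and>
        (S = B \<or> S = C \<or> orient B C S * orient B C Oc > 0))"

text \<open>Second intersection (with multiplicity) of the line through Q with direction
  D and the circle with centre c passing through Q.\<close>
definition second_inter :: "complex \<Rightarrow> complex \<Rightarrow> complex \<Rightarrow> complex" where
  "second_inter Q D c = Q - (2 * inner (Q - c) D / inner D D) *\<^sub>R D"

definition is_M_point :: "complex \<Rightarrow> complex \<Rightarrow> complex \<Rightarrow> complex \<Rightarrow> bool" where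
  "is_M_point M A B C \<longleftrightarrow>
     (let E = (B + C) / 2 in
       (ang B A C < pi / 2 \<and>
          (\<exists>Oc F. is_circumcenter Oc A B C \<and> F = second_inter A (E - A) Oc \<and>
                 M \<in> closed_segment A E \<and> dist E M = dist E F))
     \<or> (ang B A C > pi / 2 \<and>
          (\<exists>F Oc'. F = B + C - A \<and> is_circumcenter Oc' F B C \<and>
                  M = second_inter F (E - F) Oc')))"

end

theory Submission
  imports Defs
begin

text \<open>
  Put P at the origin of the complex plane. The Miquel triangle of P is the image of the pedal
  triangle of P under a spiral similarity centred at P, and the pedal vertex on the line uv is
  the explicit point foot u v. From foot (foot c a) (foot a b) = foot c a * foot a b / a, the
  triangles a, a', a'' of three consecutive steps satisfy a'' a ~ b' c' (and cyclically) up to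
  a common factor; hence a''' is a fixed multiple of a, i.e. similarity along the chain has
  period 3. It then suffices to check the first step for the circumcentre and for the points S,
  where a^2 = bc, and the second step for the orthocentre and for the points M, where the
  products |PA| * area(PBC) are proportional to the sides in some order. For a Brocard point
  the pedal triangle is itself a spiral image of the triangle with its vertices shifted
  cyclically, and the Brocard property is carried along.
\<close>

section \<open>Cross product and pedal points\<close>

definition cross :: "complex \<Rightarrow> complex \<Rightarrow> real" where
  "cross u v = Im (cnj u * v)"

lemma cross_trivial [simp]: "cross u u = 0" "cross 0 v = 0" "cross u 0 = 0"
  by (simp_all add: cross_def)

lemma cross_cyclic:
  "cross (c - b) (a - b) = cross (b - a) (c - a)" "cross (a - c) (b - c) = cross (b - a) (c - a)"
  by (simp_all add: cross_def algebra_simps)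

lemma collinear_iff_cross: "collinear {x, y, z::complex} \<longleftrightarrow> cross (y - x) (z - x) = 0"
proof (cases "y = x")
  case True then show ?thesis by (simp add: collinear_2)
next
  case False
  have "collinear {x, y, z} \<longleftrightarrow> collinear {0, y - x, z - x}"
  proof -
    have "collinear {x, y, z} = collinear {y, x, z}" by (simp add: insert_commute)
    also have "\<dots> = collinear {0, y - x, z - x}" by (rule collinear_3) simp
    finally show ?thesis .
  qed
  also have "\<dots> \<longleftrightarrow> Im ((z - x) / (y - x)) = 0"
    by (simp add: collinear_iff_Reals complex_is_Real_iff)
  also have "\<dots> \<longleftrightarrow> cross (y - x) (z - x) = 0"
    using False by (simp add: cross_def Im_divide field_simps) (auto simp: algebra_simps complex_eq_iff)
  finally show ?thesis .
qed

lemma on_line_iff_cross: "on_line X U V \<longleftrightarrow> cross (V - U) (X - U) = 0"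
  unfolding on_line_def by (rule collinear_iff_cross)

lemma nondeg_triangle_iff_cross: "nondeg_triangle A B C \<longleftrightarrow> cross (B - A) (C - A) \<noteq> 0"
  unfolding nondeg_triangle_def by (simp add: collinear_iff_cross)

lemma not_on_line_iff_cross: "\<not> on_line P B C \<longleftrightarrow> cross (B - P) (C - P) \<noteq> 0"
  unfolding on_line_iff_cross by (simp add: cross_def algebra_simps)

text \<open>The foot of the perpendicular from 0 to the line through u and v (junk value 0 for u = v).\<close>

definition foot :: "complex \<Rightarrow> complex \<Rightarrow> complex" where
  "foot u v = (u * cnj v - v * cnj u) / (2 * (cnj v - cnj u))"

lemma foot_eq_cross: "foot u v = - \<i> * of_real (cross u v) / cnj (v - u)"
proof -
  have h: "u * cnj v - v * cnj u = - 2 * \<i> * of_real (cross u v)"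
    by (simp add: cross_def complex_eq_iff algebra_simps)
  show ?thesis
    unfolding foot_def h by (cases "u = v") (simp_all add: field_simps)
qed

lemma foot_nonzero: "cross u v \<noteq> 0 \<Longrightarrow> foot u v \<noteq> 0"
  by (auto simp: foot_eq_cross)

lemma foot_commute: "foot u v = foot v u"
proof -
  have "cross v u = - cross u v" "cnj (u - v) = - cnj (v - u)" by (simp_all add: cross_def algebra_simps)
  then show ?thesis by (simp add: foot_eq_cross) (metis minus_diff_eq divide_minus_right)
qed

lemma foot_mult: "foot (m * u) (m * v) = m * foot u v"
proof (cases "m = 0")
  case False
  have "cross (m * u) (m * v) = (Re m ^ 2 + Im m ^ 2) * cross u v"
    by (simp add: cross_def algebra_simps power2_eq_square)
  then have "cross (m * u) (m * v) = (cmod m)^2 * cross u v" by (simp add: cmod_power2)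
  moreover have "(of_real ((cmod m)^2 * cross u v) :: complex) = (m * cnj m) * of_real (cross u v)"
    by (subst of_real_mult) (simp only: complex_norm_square)
  ultimately have "(of_real (cross (m * u) (m * v)) :: complex) = (m * cnj m) * of_real (cross u v)"
    by simp
  moreover have "cnj (m * v - m * u) = cnj m * cnj (v - u)" by (simp add: algebra_simps)
  ultimately show ?thesis using False
    unfolding foot_eq_cross by (cases "v = u") (simp_all add: field_simps)
qed (simp add: foot_def)

lemma norm_foot: "cmod (foot u v) = \<bar>cross u v\<bar> / cmod (v - u)"
  by (simp add: foot_eq_cross norm_mult norm_divide del: complex_cnj_diff)

lemma Re_divide_foot:
  assumes "cross u v \<noteq> 0"
  shows "Re (x / foot u v) = cross x (v - u) / cross u v"
proof -
  have "x / foot u v = \<i> * x * cnj (v - u) / of_real (cross u v)"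
    using assms by (auto simp: foot_eq_cross field_simps)
  then show ?thesis by (simp add: Re_divide_of_real cross_def algebra_simps)
qed

lemma foot_line_param:
  assumes "cross u v \<noteq> 0" "cross (v - u) (x - u) = 0"
  shows "x = foot u v * (1 + \<i> * of_real (Im (x / foot u v)))"
proof -
  have "cross x (v - u) = cross u v"
    using assms(2) by (simp add: cross_def algebra_simps)
  then have "Re (x / foot u v) = 1" using assms(1) by (simp add: Re_divide_foot)
  then have "x / foot u v = 1 + \<i> * of_real (Im (x / foot u v))"
    by (simp add: complex_eq_iff)
  with foot_nonzero[OF assms(1)] show ?thesis by (simp add: field_simps)
qed

lemma foot_diff:
  assumes "a \<noteq> b" "c \<noteq> a"
  shows "foot c a - foot a b = \<i> * of_real (cross (b - a) (c - a)) * cnj a / (cnj (a - c) * cnj (b - a))"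
proof -
  have id: "of_real (cross c a) * (b - a) + of_real (cross a b) * (c - a) = - a * of_real (cross (b - a) (c - a))"
    by (simp add: cross_def complex_eq_iff algebra_simps)
  have "foot c a - foot a b = - \<i> * (of_real (cross c a) / cnj (a - c) - of_real (cross a b) / cnj (b - a))"
    by (simp add: foot_eq_cross algebra_simps)
  also have "\<dots> = - \<i> * cnj (of_real (cross c a) * (b - a) + of_real (cross a b) * (c - a))
      / (cnj (a - c) * cnj (b - a))"
    using assms by (simp add: field_simps)
  also have "\<dots> = \<i> * of_real (cross (b - a) (c - a)) * cnj a / (cnj (a - c) * cnj (b - a))"
    unfolding id by simp
  finally show ?thesis .
qed

lemma norm_foot_diff:
  assumes "a \<noteq> b" "c \<noteq> a"
  shows "cmod (foot c a - foot a b) = \<bar>cross (b - a) (c - a)\<bar> * cmod a / (cmod (a - c) * cmod (b - a))"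
  unfolding foot_diff[OF assms] by (simp add: norm_mult norm_divide del: complex_cnj_diff)

text \<open>Taking pedal triangles twice: the identity behind the similarity of the third pedal
  triangle.\<close>

lemma foot_foot:
  assumes "a \<noteq> 0" "a \<noteq> b" "b \<noteq> c" "c \<noteq> a" "foot c a \<noteq> foot a b"
  shows "foot (foot c a) (foot a b) = foot c a * foot a b / a"
proof -
  define E F where "E = foot c a" and "F = foot a b"
  define K where "K = cnj a * (b - c) + cnj b * (c - a) + cnj c * (a - b)"
  have foot_eq: "foot u v * (2 * (cnj v - cnj u)) = u * cnj v - v * cnj u"
    and cnj_foot_eq: "cnj (foot u v) * (2 * (v - u)) = cnj u * v - cnj v * u" if "u \<noteq> v" for u v
    using that by (simp_all add: foot_def)
  have nz: "cnj a - cnj c \<noteq> 0" "cnj b - cnj a \<noteq> 0" "a - c \<noteq> 0" "b - a \<noteq> 0"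
    using assms by (auto simp: complex_cnj_cancel_iff)
  have E1: "E * (2 * (cnj a - cnj c)) = c * cnj a - a * cnj c"
    and E2: "cnj E * (2 * (a - c)) = cnj c * a - cnj a * c"
    and F1: "F * (2 * (cnj b - cnj a)) = a * cnj b - b * cnj a"
    and F2: "cnj F * (2 * (b - a)) = cnj a * b - cnj b * a"
    unfolding E_def F_def using assms foot_eq cnj_foot_eq by auto
  have d1: "(cnj F - cnj E) * (2 * (a - c) * (b - a)) = a * K"
    unfolding K_def using E2 F2 by algebra
  have "cnj F - cnj E \<noteq> 0" using assms unfolding E_def F_def by (simp add: complex_cnj_cancel_iff)
  then have K0: "K \<noteq> 0" using d1 nz by auto
  have d2: "(E * cnj F - F * cnj E) * ((b - a) * (a - c)) = E * F * K"
    unfolding K_def using E1 E2 F1 F2 nz by algebra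
  have D1: "foot E F * (2 * (cnj F - cnj E)) = E * cnj F - F * cnj E"
    using assms unfolding E_def F_def by (intro foot_eq) auto
  have "foot E F * a * K * (2 * (a - c) * (b - a)) = E * F * K * (2 * (a - c) * (b - a))"
    using d1 d2 D1 by algebra
  then have "foot E F * a = E * F" using K0 nz by simp
  then show ?thesis using assms(1) unfolding E_def F_def by (simp add: field_simps)
qed

text \<open>The factor depends only on the angle between u and the line, which is what the Brocard
  angle conditions control.\<close>

lemma foot_eq_mult_self:
  assumes "u \<noteq> 0" "u \<noteq> v"
  shows "foot u v = (1 - cnj (u * cnj (v - u)) / (u * cnj (v - u))) / 2 * u"
proof -
  define q where "q = u * cnj (v - u)"
  have q0: "q \<noteq> 0" using assms unfolding q_def by simp
  have "cross u v = - Im q" unfolding q_def cross_def by (simp add: algebra_simps)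
  then have "foot u v = \<i> * of_real (Im q) / cnj (v - u)" by (simp add: foot_eq_cross)
  also have "\<dots> = \<i> * of_real (Im q) / q * u" unfolding q_def using assms by (simp add: field_simps)
  also have "\<i> * of_real (Im q) = (q - cnj q) / 2" by (simp add: complex_eq_iff)
  finally show ?thesis using q0 unfolding q_def[symmetric] by (simp add: field_simps)
qed

section \<open>Miquel triangles as spiral images of pedal triangles\<close>

text \<open>A circle through 0 meets a line not through 0 in points whose line parameters are
  determined by the centre: this makes the parameters of the three Miquel points agree.\<close>

lemma circle_through_origin:
  assumes "cmod (g - b) = cmod g"
  shows "2 * Re (cnj g * b) = (cmod b)^2"
proof -
  have "Re (g - b)^2 + Im (g - b)^2 = Re g ^2 + Im g^2"
    using assms by (metis cmod_power2)
  moreover have "(cmod b)^2 = Re b^2 + Im b^2" by (simp only: cmod_power2)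
  ultimately show ?thesis by (simp add: algebra_simps power2_eq_square)
qed

lemma circle_chord_param:
  fixes d g b x :: complex and s t :: real
  assumes "b = d * (1 + \<i> * s)" "x = d * (1 + \<i> * t)" "s \<noteq> t"
    and "2 * Re (cnj g * b) = (cmod b)^2" "2 * Re (cnj g * x) = (cmod x)^2"
  shows "2 * Im (cnj g * b) = - t * (cmod b)^2"
proof -
  obtain d1 d2 where d: "d = Complex d1 d2" by (metis complex.exhaust)
  obtain g1 g2 where g: "g = Complex g1 g2" by (metis complex.exhaust)
  have e1: "2 * (g1 * (d1 - d2 * s) + g2 * (d2 + d1 * s)) = (d1 - d2 * s)^2 + (d2 + d1 * s)^2"
    using assms(4) unfolding assms(1) d g by (simp add: cmod_power2 algebra_simps)
  have e2: "2 * (g1 * (d1 - d2 * t) + g2 * (d2 + d1 * t)) = (d1 - d2 * t)^2 + (d2 + d1 * t)^2"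
    using assms(5) unfolding assms(2) d g by (simp add: cmod_power2 algebra_simps)
  have "(s - t) * (2 * (g1 * (d2 + d1 * s) - g2 * (d1 - d2 * s)) + t * ((d1 - d2 * s)^2 + (d2 + d1 * s)^2)) = 0"
    using e1 e2 by algebra
  with assms(3) have "2 * (g1 * (d2 + d1 * s) - g2 * (d1 - d2 * s)) + t * ((d1 - d2 * s)^2 + (d2 + d1 * s)^2) = 0"
    by simp
  then show ?thesis unfolding assms(1) d g by (simp add: cmod_power2 algebra_simps)
qed

lemma circle_line_param:
  assumes uv: "cross u v \<noteq> 0" and on_line: "cross (v - u) (x - u) = 0" "cross (v - u) (y - u) = 0"
    and "y \<noteq> x" and circle: "cmod (g - y) = cmod g" "cmod (g - x) = cmod g"
  shows "2 * Im (cnj g * y) = - Im (x / foot u v) * (cmod y)^2"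
proof -
  have y: "y = foot u v * (1 + \<i> * of_real (Im (y / foot u v)))"
    and x: "x = foot u v * (1 + \<i> * of_real (Im (x / foot u v)))"
    using foot_line_param[OF uv] on_line by auto
  with \<open>y \<noteq> x\<close> have "Im (y / foot u v) \<noteq> Im (x / foot u v)" by metis
  from circle_chord_param[OF y x this] show ?thesis
    using circle_through_origin circle by blast
qed

lemma miquel_circle_same_param:
  assumes off: "\<not> on_line P A B" "\<not> on_line P B C" and on_lines: "on_line X B C" "on_line Z A B"
    and circle: "on_circle3 P B Z X"
  shows "Im ((Z - P) / foot (A - P) (B - P)) = Im ((X - P) / foot (B - P) (C - P))"
proof -
  define a b c x z where "a = A - P" and "b = B - P" and "c = C - P" and "x = X - P" and "z = Z - P"
  have cross: "cross a b \<noteq> 0" "cross b c \<noteq> 0"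
    using off unfolding not_on_line_iff_cross a_def b_def c_def by auto
  have lines: "cross (c - b) (x - b) = 0" "cross (b - a) (z - a) = 0"
    using on_lines unfolding on_line_iff_cross a_def b_def c_def x_def z_def by auto
  obtain g where g: "dist g B = dist g Z" "dist g B = dist g X" "dist g B = dist g P"
    and "\<not> collinear {B, Z, X}"
    using circle unfolding on_circle3_def by auto
  then have "b \<noteq> x" "b \<noteq> z" unfolding b_def x_def z_def by (auto simp: insert_commute)
  define G where "G = g - P"
  have G: "cmod (G - b) = cmod G" "cmod (G - x) = cmod G" "cmod (G - z) = cmod G"
    using g unfolding G_def b_def x_def z_def by (auto simp: dist_norm)
  have "2 * Im (cnj G * b) = - Im (x / foot b c) * (cmod b)^2"
    by (rule circle_line_param[OF cross(2) lines(1) _ _ G(1,2)]) (use \<open>b \<noteq> x\<close> in simp_all)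
  moreover have "2 * Im (cnj G * b) = - Im (z / foot a b) * (cmod b)^2"
    by (rule circle_line_param[OF cross(1) lines(2) _ _ G(1,3)]) (use \<open>b \<noteq> z\<close> in simp_all)
  moreover have "b \<noteq> 0" using cross by auto
  ultimately show ?thesis unfolding a_def b_def c_def x_def z_def by simp
qed

lemma miquel_triangle_spiral:
  assumes off: "\<not> on_line P B C" "\<not> on_line P C A" "\<not> on_line P A B"
    and mq: "miquel_triangle P A B C X Y Z"
  shows "\<exists>\<mu>. \<mu> \<noteq> 0 \<and> X - P = \<mu> * foot (B - P) (C - P) \<and> Y - P = \<mu> * foot (C - P) (A - P)
            \<and> Z - P = \<mu> * foot (A - P) (B - P)"
proof -
  have cross: "cross (A - P) (B - P) \<noteq> 0" "cross (B - P) (C - P) \<noteq> 0" "cross (C - P) (A - P) \<noteq> 0"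
    using off unfolding not_on_line_iff_cross by auto
  have lines: "cross ((C - P) - (B - P)) ((X - P) - (B - P)) = 0"
    "cross ((A - P) - (C - P)) ((Y - P) - (C - P)) = 0" "cross ((B - P) - (A - P)) ((Z - P) - (A - P)) = 0"
    using mq unfolding miquel_triangle_def on_line_iff_cross by simp_all
  define t where "t = Im ((X - P) / foot (B - P) (C - P))"
  have "Im ((Z - P) / foot (A - P) (B - P)) = t" "Im ((Y - P) / foot (C - P) (A - P)) = t"
    using miquel_circle_same_param[of P A B C X Z] miquel_circle_same_param[of P B C A Y X] off mq
    unfolding miquel_triangle_def t_def by auto
  moreover have "(1 + \<i> * of_real t) \<noteq> 0" by (simp add: complex_eq_iff)
  ultimately show ?thesis
    using foot_line_param[OF cross(2) lines(1)] foot_line_param[OF cross(3) lines(2)]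
      foot_line_param[OF cross(1) lines(3)]
    unfolding t_def by (metis mult.commute)
qed

section \<open>Similar triangles\<close>

lemma sim_labelled_refl: "sim_labelled A B C A B C"
  unfolding sim_labelled_def by (rule exI[of _ 1]) simp

lemma tri_sim_refl: "tri_sim A B C A B C"
  and tri_sim_rotate_left: "tri_sim A B C B C A"
  and tri_sim_rotate_right: "tri_sim A B C C A B"
  unfolding tri_sim_def using sim_labelled_refl by blast+

lemma tri_sim_rotate: "tri_sim B C A B' C' A' \<Longrightarrow> tri_sim A B C A' B' C'"
  unfolding tri_sim_def sim_labelled_def
  by (elim disjE; (elim exE conjE)) (metis dist_commute)+

lemma dist_spiral: "dist (P + L * (X - P)) (P + L * (Y - P)) = cmod L * dist X Y"
proof -
  have "P + L * (X - P) - (P + L * (Y - P)) = L * (X - Y)" by (simp add: algebra_simps)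
  then show ?thesis by (simp add: dist_norm norm_mult)
qed

lemma sim_labelled_rescale:
  assumes "sim_labelled A B C X Y Z" "r > 0"
    "dist X' Y' = r * dist X Y" "dist Y' Z' = r * dist Y Z" "dist Z' X' = r * dist Z X"
  shows "sim_labelled A B C X' Y' Z'"
proof -
  obtain k where "k > 0" "dist X Y = k * dist A B" "dist Y Z = k * dist B C" "dist Z X = k * dist C A"
    using assms(1) unfolding sim_labelled_def by auto
  then show ?thesis unfolding sim_labelled_def
    by (intro exI[of _ "r * k"]) (use assms in auto)
qed

lemma tri_sim_spiral:
  assumes "tri_sim A B C X Y Z" "L \<noteq> 0"
  shows "tri_sim A B C (P + L * (X - P)) (P + L * (Y - P)) (P + L * (Z - P))"
proof -
  have "cmod L > 0" using assms(2) by simp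
  with assms(1) show ?thesis unfolding tri_sim_def
    by (elim disjE) (metis sim_labelled_rescale dist_spiral dist_commute)+
qed

section \<open>Brocard points\<close>

lemma cross_signs_in_hull:
  assumes "P \<in> convex hull {A, B, C}"
    and nz: "cross (A - P) (B - P) \<noteq> 0" "cross (B - P) (C - P) \<noteq> 0" "cross (C - P) (A - P) \<noteq> 0"
  shows "cross (A - P) (B - P) * cross (B - P) (C - P) > 0 \<and> cross (B - P) (C - P) * cross (C - P) (A - P) > 0"
proof -
  obtain u v w where uvw: "0 \<le> u" "0 \<le> v" "0 \<le> w" "u + v + w = 1"
    and P: "P = u *\<^sub>R A + v *\<^sub>R B + w *\<^sub>R C"
    using assms(1) unfolding convex_hull_3 by auto
  define a b c where "a = A - P" and "b = B - P" and "c = C - P"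
  define X Y Z where "X = cross a b" and "Y = cross b c" and "Z = cross c a"
  have "of_real (u + v + w) * P = of_real u * A + of_real v * B + of_real w * C"
    using P uvw(4) by (simp add: scaleR_conv_of_real)
  then have bary: "of_real u * a + of_real v * b + of_real w * c = 0"
    unfolding a_def b_def c_def by (simp add: algebra_simps)
  have "cross d (of_real u * a + of_real v * b + of_real w * c) = u * cross d a + v * cross d b + w * cross d c"
    for d by (simp add: cross_def algebra_simps)
  from this[of a] this[of b] this[of c] have r: "v * X = w * Z" "w * Y = u * X" "u * Z = v * Y"
    unfolding bary X_def Y_def Z_def by (simp_all add: cross_def algebra_simps)
  have XYZ: "X \<noteq> 0" "Y \<noteq> 0" "Z \<noteq> 0" using nz unfolding X_def Y_def Z_def a_def b_def c_def by auto
  have pos: "u > 0" "v > 0" "w > 0"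
    using r uvw XYZ by (smt (verit) mult_eq_0_iff)+
  have "(v * w) * (X * Z) = (w * Z)^2" "(w * u) * (Y * X) = (u * X)^2"
    using r by (simp_all add: power2_eq_square algebra_simps)
  moreover have "(w * Z)^2 > 0" "(u * X)^2 > 0" using pos XYZ by simp_all
  ultimately have "(v * w) * (X * Z) > 0" "(w * u) * (Y * X) > 0" by simp_all
  then have "X * Z > 0" "Y * X > 0"
    using pos by (metis mult_pos_pos zero_less_mult_pos)+
  then show ?thesis unfolding X_def Y_def Z_def a_def b_def c_def
    by (auto simp: zero_less_mult_iff mult.commute)
qed

lemma ang_eq_arccos: "ang X V Y = arccos (Re ((Y - V) * cnj (X - V)) / cmod ((Y - V) * cnj (X - V)))"
proof -
  have inner: "inner u v = Re (v * cnj u)" for u v :: complex by (simp add: inner_complex_def algebra_simps)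
  have vangle: "vangle u v = arccos (Re (v * cnj u) / cmod (v * cnj u))" for u v
    by (simp add: vangle_def inner norm_mult mult.commute)
  show ?thesis unfolding ang_def vangle ..
qed

lemma arccos_Re_divide_norm_inj:
  assumes "arccos (Re z1 / cmod z1) = arccos (Re z2 / cmod z2)"
  shows "Re z1 / cmod z1 = Re z2 / cmod z2"
proof -
  have "\<bar>Re z / cmod z\<bar> \<le> 1" for z
    using abs_Re_le_cmod[of z] by (cases "z = 0") (simp_all add: abs_div divide_le_eq_1)
  then show ?thesis using assms arccos_eq_iff by blast
qed

lemma ang_eqD:
  "ang X V Y = ang X' V' Y' \<Longrightarrow>
    Re ((Y - V) * cnj (X - V)) / cmod ((Y - V) * cnj (X - V))
      = Re ((Y' - V') * cnj (X' - V')) / cmod ((Y' - V') * cnj (X' - V'))"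
  unfolding ang_eq_arccos by (rule arccos_Re_divide_norm_inj)

lemma cnj_divide_self_eq:
  assumes z1: "z1 \<noteq> 0" and z2: "z2 \<noteq> 0" and re: "Re z1 / cmod z1 = Re z2 / cmod z2"
    and im: "Im z1 * Im z2 > 0"
  shows "cnj z1 / z1 = cnj z2 / z2"
proof -
  define x y1 y2 where "x = Re z1 / cmod z1" and "y1 = Im z1 / cmod z1" and "y2 = Im z2 / cmod z2"
  have n1: "cmod z1 > 0" and n2: "cmod z2 > 0" using z1 z2 by auto
  have "x^2 + y1^2 = 1" unfolding x_def y1_def using n1
    by (simp add: power_divide cmod_power2[symmetric] field_simps) (simp add: cmod_power2)
  moreover have "x^2 + y2^2 = 1" unfolding re x_def y2_def using n2
    by (simp add: power_divide field_simps) (simp add: cmod_power2)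
  moreover have "y1 * y2 > 0" unfolding y1_def y2_def using im n1 n2 by (simp add: field_simps)
  ultimately have "y1 = y2"
    by (smt (verit) power2_eq_iff mult_minus_left zero_le_square)
  have e1: "z1 = of_real (cmod z1) * Complex x y1" using n1 unfolding x_def y1_def
    by (simp add: complex_eq_iff)
  have e2: "z2 = of_real (cmod z2) * Complex x y1" using n2 unfolding x_def re \<open>y1 = y2\<close> y2_def
    by (simp add: complex_eq_iff)
  have "cnj z1 / z1 = cnj (Complex x y1) / Complex x y1"
    by (subst (1 2) e1) (use n1 in \<open>simp add: field_simps\<close>)
  also have "\<dots> = cnj z2 / z2"
    by (subst (1 2) e2) (use n2 in \<open>simp add: field_simps\<close>)
  finally show ?thesis .
qed

lemma first_brocard_foot:
  assumes fb: "first_brocard P A B C"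
    and off: "cross (A - P) (B - P) \<noteq> 0" "cross (B - P) (C - P) \<noteq> 0" "cross (C - P) (A - P) \<noteq> 0"
  shows "\<exists>\<rho>. foot (B - P) (C - P) = \<rho> * (B - P) \<and> foot (C - P) (A - P) = \<rho> * (C - P)
    \<and> foot (A - P) (B - P) = \<rho> * (A - P)"
proof -
  define a b c where "a = A - P" and "b = B - P" and "c = C - P"
  have "P \<in> convex hull {A, B, C}" using fb interior_subset unfolding first_brocard_def by blast
  from cross_signs_in_hull[OF this off] have sg: "cross a b * cross b c > 0" "cross b c * cross c a > 0"
    unfolding a_def b_def c_def by auto
  have nz: "a \<noteq> 0" "b \<noteq> 0" "c \<noteq> 0" "a \<noteq> b" "b \<noteq> c" "c \<noteq> a"
    using off unfolding a_def b_def c_def by auto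
  define qA qB qC where "qA = a * cnj (b - a)" and "qB = b * cnj (c - b)" and "qC = c * cnj (a - c)"
  have e1: "Re (- qA) / cmod (- qA) = Re (- qB) / cmod (- qB)"
    using ang_eqD[of B A P C B P] fb unfolding first_brocard_def qA_def qB_def a_def b_def c_def
    by (simp add: algebra_simps)
  have e2: "Re (- qB) / cmod (- qB) = Re (- qC) / cmod (- qC)"
    using ang_eqD[of C B P A C P] fb unfolding first_brocard_def qC_def qB_def a_def b_def c_def
    by (simp add: algebra_simps)
  have i1: "Im (- qA) * Im (- qB) > 0" "Im (- qB) * Im (- qC) > 0"
    using sg unfolding qA_def qB_def qC_def by (simp_all add: cross_def algebra_simps)
  have q0: "- qA \<noteq> 0" "- qB \<noteq> 0" "- qC \<noteq> 0" using nz unfolding qA_def qB_def qC_def by auto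
  have d: "cnj qA / qA = cnj qB / qB" "cnj qB / qB = cnj qC / qC"
    using cnj_divide_self_eq[OF q0(1,2) e1 i1(1)] cnj_divide_self_eq[OF q0(2,3) e2 i1(2)] by simp_all
  define \<rho> where "\<rho> = (1 - cnj qB / qB) / 2"
  have "foot b c = \<rho> * b" using foot_eq_mult_self[OF nz(2) nz(5)] unfolding \<rho>_def qB_def by simp
  moreover have "foot c a = \<rho> * c"
    using foot_eq_mult_self[OF nz(3) nz(6)] unfolding \<rho>_def d(2) qC_def by simp
  moreover have "foot a b = \<rho> * a"
    using foot_eq_mult_self[OF nz(1) nz(4)] unfolding \<rho>_def d(1)[symmetric] qA_def by simp
  ultimately show ?thesis unfolding a_def b_def c_def by blast
qed

lemma second_brocard_foot:
  assumes sb: "second_brocard P A B C"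
    and off: "cross (A - P) (B - P) \<noteq> 0" "cross (B - P) (C - P) \<noteq> 0" "cross (C - P) (A - P) \<noteq> 0"
  shows "\<exists>\<rho>. foot (B - P) (C - P) = \<rho> * (C - P) \<and> foot (C - P) (A - P) = \<rho> * (A - P)
    \<and> foot (A - P) (B - P) = \<rho> * (B - P)"
proof -
  define a b c where "a = A - P" and "b = B - P" and "c = C - P"
  have "P \<in> convex hull {A, B, C}" using sb interior_subset unfolding second_brocard_def by blast
  from cross_signs_in_hull[OF this off] have sg: "cross a b * cross b c > 0" "cross b c * cross c a > 0"
    unfolding a_def b_def c_def by auto
  have nz: "a \<noteq> 0" "b \<noteq> 0" "c \<noteq> 0" "a \<noteq> b" "b \<noteq> c" "c \<noteq> a"
    using off unfolding a_def b_def c_def by auto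
  define qA qB qC where "qA = a * cnj (c - a)" and "qB = b * cnj (a - b)" and "qC = c * cnj (b - c)"
  have "Re (- cnj qA) / cmod (- cnj qA) = Re (- cnj qB) / cmod (- cnj qB)"
    "Re (- cnj qB) / cmod (- cnj qB) = Re (- cnj qC) / cmod (- cnj qC)"
    using ang_eqD[of P A C P B A] ang_eqD[of P B A P C B] sb unfolding second_brocard_def
    by (simp_all add: qA_def qB_def qC_def a_def b_def c_def algebra_simps)
  then have e: "Re qA / cmod qA = Re qB / cmod qB" "Re qB / cmod qB = Re qC / cmod qC"
    by (simp_all add: complex_mod_cnj)
  have im: "Im qA = cross c a" "Im qB = cross a b" "Im qC = cross b c"
    unfolding qA_def qB_def qC_def by (simp_all add: cross_def algebra_simps)
  have i: "Im qA * Im qB > 0" "Im qB * Im qC > 0"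
    using sg unfolding im by (auto simp: zero_less_mult_iff)
  have q0: "qA \<noteq> 0" "qB \<noteq> 0" "qC \<noteq> 0" using nz unfolding qA_def qB_def qC_def by auto
  have d: "cnj qA / qA = cnj qB / qB" "cnj qB / qB = cnj qC / qC"
    using cnj_divide_self_eq[OF q0(1,2) e(1) i(1)] cnj_divide_self_eq[OF q0(2,3) e(2) i(2)] by simp_all
  define \<rho> where "\<rho> = (1 - cnj qB / qB) / 2"
  have "foot b c = \<rho> * c"
    using foot_eq_mult_self[OF nz(3), of b] nz unfolding \<rho>_def d(2) qC_def by (simp add: foot_commute)
  moreover have "foot c a = \<rho> * a"
    using foot_eq_mult_self[OF nz(1), of c] nz unfolding \<rho>_def d(1)[symmetric] qA_def by (simp add: foot_commute)
  moreover have "foot a b = \<rho> * b"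
    using foot_eq_mult_self[OF nz(2), of a] nz unfolding \<rho>_def qB_def by (simp add: foot_commute)
  ultimately show ?thesis unfolding a_def b_def c_def by blast
qed

lemma ang_spiral:
  assumes "k \<noteq> 0"
  shows "ang (P + k * (X - P)) (P + k * (V - P)) (P + k * (Y - P)) = ang X V Y"
proof -
  have "(P + k * (Y - P) - (P + k * (V - P))) * cnj (P + k * (X - P) - (P + k * (V - P)))
        = of_real ((cmod k)^2) * ((Y - V) * cnj (X - V))"
    by (simp add: complex_norm_square[symmetric] algebra_simps)
  moreover have "cmod k ^ 2 > 0" using assms by simp
  moreover have "Re (of_real r * w) / cmod (of_real r * w) = Re w / cmod w" if "r > 0" for r w
    using that by (simp add: norm_mult)
  ultimately show ?thesis unfolding ang_eq_arccos by (simp only:)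
qed

lemma interior_hull_spiral:
  fixes P A B C k :: complex
  assumes "k \<noteq> 0" "P \<in> interior (convex hull {A, B, C})"
  shows "P \<in> interior (convex hull {P + k * (A - P), P + k * (B - P), P + k * (C - P)})"
proof -
  have image: "{P + k * (A - P), P + k * (B - P), P + k * (C - P)} = (\<lambda>z. (P - k * P) + z) ` ((\<lambda>z. k * z) ` {A, B, C})"
    by (auto simp: algebra_simps)
  have inj: "inj (\<lambda>z. k * z)" using assms(1) by (auto intro: injI)
  have "interior (convex hull {P + k * (A - P), P + k * (B - P), P + k * (C - P)})
      = (\<lambda>z. (P - k * P) + z) ` ((\<lambda>z. k * z) ` interior (convex hull {A, B, C}))"
    unfolding image convex_hull_translation convex_hull_linear_image[OF linear_times, symmetric]
    by (simp add: interior_translation interior_injective_linear_image[OF linear_times inj])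
  moreover have "P = (P - k * P) + k * P" by simp
  ultimately show ?thesis using assms(2) by (metis image_eqI)
qed

lemma first_brocard_spiral:
  assumes "first_brocard P A B C" "k \<noteq> 0"
  shows "first_brocard P (P + k * (B - P)) (P + k * (C - P)) (P + k * (A - P))"
proof -
  have "P \<in> interior (convex hull {P + k * (A - P), P + k * (B - P), P + k * (C - P)})"
    using interior_hull_spiral assms unfolding first_brocard_def by blast
  moreover have "{P + k * (A - P), P + k * (B - P), P + k * (C - P)} = {P + k * (B - P), P + k * (C - P), P + k * (A - P)}"
    by auto
  moreover have "P = P + k * (P - P)" by simp
  ultimately show ?thesis using assms unfolding first_brocard_def by (metis ang_spiral)
qed

lemma second_brocard_spiral:
  assumes "second_brocard P A B C" "k \<noteq> 0"
  shows "second_brocard P (P + k * (C - P)) (P + k * (A - P)) (P + k * (B - P))"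
proof -
  have "P \<in> interior (convex hull {P + k * (A - P), P + k * (B - P), P + k * (C - P)})"
    using interior_hull_spiral assms unfolding second_brocard_def by blast
  moreover have "{P + k * (A - P), P + k * (B - P), P + k * (C - P)} = {P + k * (C - P), P + k * (A - P), P + k * (B - P)}"
    by auto
  moreover have "P = P + k * (P - P)" by simp
  ultimately show ?thesis using assms unfolding second_brocard_def by (metis ang_spiral)
qed

section \<open>The points S, M and the orthocentre\<close>

lemma reflect_dir_eq: "w \<noteq> 0 \<Longrightarrow> reflect_dir w x = cnj x * w^2 / (w * cnj w)"
proof -
  assume w0: "w \<noteq> 0"
  have i1: "(of_real (inner x w) :: complex) = (w * cnj x + cnj w * x) / 2"
    by (simp add: inner_complex_def complex_eq_iff algebra_simps)
  have i2: "(of_real (inner w w) :: complex) = w * cnj w"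
    by (simp add: inner_complex_def complex_eq_iff algebra_simps power2_eq_square)
  have "reflect_dir w x = 2 * of_real (inner x w) / of_real (inner w w) * w - x"
    unfolding reflect_dir_def by (simp add: scaleR_conv_of_real)
  also have "\<dots> = cnj x * w^2 / (w * cnj w)" unfolding i1 i2 using w0
    by (simp add: field_simps power2_eq_square)
  finally show ?thesis .
qed

lemma reflect_dir_unit_sum:
  assumes "u1 * cnj u1 = 1" "u2 * cnj u2 = 1" "u1 + u2 \<noteq> 0"
  shows "reflect_dir (u1 + u2) x = cnj x * (u1 * u2)"
proof -
  have "(u1 + u2)^2 = u1 * u2 * ((u1 + u2) * cnj (u1 + u2))"
    using assms(1,2) by (simp add: algebra_simps power2_eq_square)
  moreover have "(u1 + u2) * cnj (u1 + u2) \<noteq> 0" using assms(3) by (simp del: complex_cnj_add)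
  ultimately show ?thesis using reflect_dir_eq[OF assms(3)] by simp
qed

lemma symmedian_dir_eq:
  fixes A B C :: complex
  assumes nd: "nondeg_triangle A B C"
  defines "p \<equiv> B - A" and "q \<equiv> C - A"
  shows "symmedian_dir A B C
    = of_real (1 / (2 * cmod p * cmod q)) * (of_real ((cmod p)^2) * q + of_real ((cmod q)^2) * p)"
proof -
  have cpq: "cross p q \<noteq> 0" using nd unfolding nondeg_triangle_iff_cross p_def q_def .
  then have ap: "cmod p > 0" "cmod q > 0" by auto
  define u1 u2 where "u1 = p / of_real (cmod p)" and "u2 = q / of_real (cmod q)"
  have pa: "p * cnj p = of_real ((cmod p)^2)" "q * cnj q = of_real ((cmod q)^2)"
    by (simp_all only: complex_norm_square)
  have uu: "u1 * cnj u1 = 1" "u2 * cnj u2 = 1" unfolding u1_def u2_def using pa ap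
    by (simp_all add: field_simps power2_eq_square)
  have "u1 + u2 \<noteq> 0"
  proof
    assume "u1 + u2 = 0"
    then have "p = - of_real (cmod p / cmod q) * q" unfolding u1_def u2_def using ap
      by (simp add: field_simps add_eq_0_iff)
    then obtain r :: real where "p = of_real r * q" by (metis mult_minus_left of_real_minus)
    then have "cross p q = 0" by (simp add: cross_def)
    then show False using cpq by simp
  qed
  moreover have "(B - A) /\<^sub>R norm (B - A) + (C - A) /\<^sub>R norm (C - A) = u1 + u2"
    unfolding u1_def u2_def p_def q_def by (simp add: scaleR_conv_of_real divide_inverse_commute)
  ultimately have "symmedian_dir A B C = cnj ((p + q) / 2) * (u1 * u2)"
    unfolding symmedian_dir_def using reflect_dir_unit_sum[OF uu]
    by (simp add: p_def q_def field_simps)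
  also have "\<dots> = of_real (1 / (2 * cmod p * cmod q)) * (of_real ((cmod p)^2) * q + of_real ((cmod q)^2) * p)"
    unfolding u1_def u2_def using ap pa by (simp add: field_simps)
  finally show ?thesis .
qed

text \<open>Coordinates with A at the origin, B = (p1, p2), C = (q1, q2), circumcentre (o1, o2) and
  centre (k1, k2) of the circle through B, C and the circumcentre; t * (g1, g2) runs along the
  symmedian from A.\<close>

lemma symmedian_meets_circle:
  fixes p1 p2 q1 q2 o1 o2 k1 k2 t :: real
  defines "g1 \<equiv> (p1^2 + p2^2) * q1 + (q1^2 + q2^2) * p1" and "g2 \<equiv> (p1^2 + p2^2) * q2 + (q1^2 + q2^2) * p2"
  assumes pq: "p1 * q2 - p2 * q1 \<noteq> 0"
    and O: "o1^2 + o2^2 = (o1 - p1)^2 + (o2 - p2)^2" "(o1 - p1)^2 + (o2 - p2)^2 = (o1 - q1)^2 + (o2 - q2)^2"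
    and K: "(k1 - p1)^2 + (k2 - p2)^2 = (k1 - q1)^2 + (k2 - q2)^2"
      "(k1 - p1)^2 + (k2 - p2)^2 = (k1 - o1)^2 + (k2 - o2)^2"
      "(k1 - p1)^2 + (k2 - p2)^2 = (k1 - t * g1)^2 + (k2 - t * g2)^2"
  shows "t * ((p1 + q1)^2 + (p2 + q2)^2) = 1 \<or> 2 * (p1 * q1 + p2 * q2) * t = 1"
proof -
  have "((p1 - q1)^2 + (p2 - q2)^2) * (2 * (p1 * q1 + p2 * q2) * (k1^2 + k2^2 - ((k1 - p1)^2 + (k2 - p2)^2))
          - (p1^2 + p2^2) * (q1^2 + q2^2)) = 0"
    using O K(1,2) by algebra
  moreover have "(p1 - q1)^2 + (p2 - q2)^2 \<noteq> 0"
    using pq by (auto simp: sum_power2_eq_zero_iff)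
  ultimately have "2 * (p1 * q1 + p2 * q2) * (k1^2 + k2^2 - ((k1 - p1)^2 + (k2 - p2)^2))
      = (p1^2 + p2^2) * (q1^2 + q2^2)"
    by (metis mult_eq_0_iff right_minus_eq)
  then have "(p1^2 + p2^2) * (q1^2 + q2^2) * (t * ((p1 + q1)^2 + (p2 + q2)^2) - 1)
      * (2 * (p1 * q1 + p2 * q2) * t - 1) = 0"
    using K(1,3) unfolding g1_def g2_def by algebra
  moreover have "(p1^2 + p2^2) * (q1^2 + q2^2) \<noteq> 0"
    using pq by (auto simp: sum_power2_eq_zero_iff)
  ultimately show ?thesis by (metis mult_eq_0_iff right_minus_eq)
qed

text \<open>The second intersection lies on the other side of BC than the circumcentre.\<close>

lemma symmedian_meets_circle_far_side:
  fixes p1 p2 q1 q2 o1 o2 t :: real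
  defines "g1 \<equiv> (p1^2 + p2^2) * q1 + (q1^2 + q2^2) * p1" and "g2 \<equiv> (p1^2 + p2^2) * q2 + (q1^2 + q2^2) * p2"
  assumes pq: "p1 * q2 - p2 * q1 \<noteq> 0"
    and O: "o1^2 + o2^2 = (o1 - p1)^2 + (o2 - p2)^2" "(o1 - p1)^2 + (o2 - p2)^2 = (o1 - q1)^2 + (o2 - q2)^2"
    and t: "2 * (p1 * q1 + p2 * q2) * t = 1"
  shows "((q1 - p1) * (t * g2 - p2) - (q2 - p2) * (t * g1 - p1))
    * ((q1 - p1) * (o2 - p2) - (q2 - p2) * (o1 - p1)) \<le> 0"
proof -
  define X Y D m where "X = (q1 - p1) * (t * g2 - p2) - (q2 - p2) * (t * g1 - p1)"
    and "Y = (q1 - p1) * (o2 - p2) - (q2 - p2) * (o1 - p1)"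
    and "D = (p1 - q1)^2 + (p2 - q2)^2" and "m = p1 * q1 + p2 * q2"
  have "2 * m * X = - (p1 * q2 - p2 * q1) * D"
    using t unfolding X_def D_def m_def g1_def g2_def by algebra
  moreover have "2 * (p1 * q2 - p2 * q1) * Y = m * D"
    using O unfolding Y_def D_def m_def by algebra
  ultimately have "(4 * m * (p1 * q2 - p2 * q1)) * (X * Y) = (4 * m * (p1 * q2 - p2 * q1)) * (- D * D / 4)"
    by algebra
  moreover have "m \<noteq> 0" using t unfolding m_def by (metis mult_zero_left mult_zero_right zero_neq_one)
  then have "4 * m * (p1 * q2 - p2 * q1) \<noteq> 0" using pq by simp
  ultimately have "X * Y = - D * D / 4" by (metis mult_left_cancel)
  then show ?thesis unfolding X_def Y_def by simp
qed

lemma symmedian_circle_cases: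
  assumes nd: "nondeg_triangle A B C" and cc: "is_circumcenter Oc A B C"
    and K: "dist K B = dist K C" "dist K B = dist K Oc" "dist K B = dist K S"
  defines "p \<equiv> B - A" and "q \<equiv> C - A"
  assumes S: "S - A = of_real \<tau> * (of_real ((cmod p)^2) * q + of_real ((cmod q)^2) * p)"
  shows "\<tau> * (cmod (p + q))^2 = 1 \<or> orient B C S * orient B C Oc \<le> 0"
proof -
  define p1 p2 q1 q2 o1 o2 k1 k2 where "p1 = Re p" "p2 = Im p" "q1 = Re q" "q2 = Im q"
    "o1 = Re (Oc - A)" "o2 = Im (Oc - A)" "k1 = Re (K - A)" "k2 = Im (K - A)"
  note coords = p1_p2_q1_q2_o1_o2_k1_k2_def
  have s_coords: "Re (S - A) = \<tau> * ((p1^2 + p2^2) * q1 + (q1^2 + q2^2) * p1)"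
    "Im (S - A) = \<tau> * ((p1^2 + p2^2) * q2 + (q1^2 + q2^2) * p2)"
    unfolding S coords by (simp_all add: cmod_power2 algebra_simps)
  have dist_sq: "Re (X - A - (Y - A))^2 + Im (X - A - (Y - A))^2
      = Re (X - A - (Z - A))^2 + Im (X - A - (Z - A))^2" if "dist X Y = dist X Z" for X Y Z
  proof -
    have "cmod (X - Y)^2 = cmod (X - Z)^2" using that by (simp add: dist_norm)
    then show ?thesis by (simp only: cmod_power2) simp
  qed
  have O: "o1^2 + o2^2 = (o1 - p1)^2 + (o2 - p2)^2" "(o1 - p1)^2 + (o2 - p2)^2 = (o1 - q1)^2 + (o2 - q2)^2"
    using dist_sq[of Oc A B] dist_sq[of Oc B C] cc unfolding is_circumcenter_def coords p_def q_def
    by (simp_all add: dist_commute)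
  have "(k1 - p1)^2 + (k2 - p2)^2 = (k1 - q1)^2 + (k2 - q2)^2"
    "(k1 - p1)^2 + (k2 - p2)^2 = (k1 - o1)^2 + (k2 - o2)^2"
    "(k1 - p1)^2 + (k2 - p2)^2 = (k1 - Re (S - A))^2 + (k2 - Im (S - A))^2"
    using dist_sq[of K B C] dist_sq[of K B Oc] dist_sq[of K B S] K unfolding coords p_def q_def
    by simp_all
  note circle = this[unfolded s_coords]
  have "cross p q \<noteq> 0" using nd unfolding nondeg_triangle_iff_cross p_def q_def .
  then have pq: "p1 * q2 - p2 * q1 \<noteq> 0" unfolding cross_def coords by simp
  have "orient B C S = (q1 - p1) * (Im (S - A) - p2) - (q2 - p2) * (Re (S - A) - p1)"
    "orient B C Oc = (q1 - p1) * (o2 - p2) - (q2 - p2) * (o1 - p1)"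
    unfolding orient_def coords p_def q_def by (simp_all add: algebra_simps)
  moreover have "(cmod (p + q))^2 = (p1 + q1)^2 + (p2 + q2)^2"
    unfolding coords by (simp add: cmod_power2)
  ultimately show ?thesis
    using symmedian_meets_circle[OF pq O circle] symmedian_meets_circle_far_side[OF pq O]
    unfolding s_coords by auto
qed

lemma S_point_relation:
  assumes hs: "is_S_point S A B C" and nd: "nondeg_triangle A B C"
  shows "(A - S)^2 = (B - S) * (C - S)"
proof -
  define p q where "p = B - A" and "q = C - A"
  have cpq: "cross p q \<noteq> 0" using nd unfolding nondeg_triangle_iff_cross p_def q_def .
  then have ap: "cmod p > 0" "cmod q > 0" by auto
  obtain Oc t K where cc: "is_circumcenter Oc A B C" and t: "t > 0"
    and S: "S = A + t *\<^sub>R symmedian_dir A B C"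
    and K: "dist K B = dist K C" "dist K B = dist K Oc" "dist K B = dist K S"
    and arc: "S = B \<or> S = C \<or> orient B C S * orient B C Oc > 0"
    using hs unfolding is_S_point_def on_circle3_def by blast
  define \<tau> s g where "\<tau> = t / (2 * cmod p * cmod q)" and "s = S - A"
    and "g = of_real ((cmod p)^2) * q + of_real ((cmod q)^2) * p"
  have sg: "s = of_real \<tau> * g"
    unfolding s_def S g_def symmedian_dir_eq[OF nd] \<tau>_def p_def q_def by (simp add: scaleR_conv_of_real)
  from symmedian_circle_cases[OF nd cc K, folded p_def q_def, OF sg[unfolded s_def g_def]]
  show ?thesis
  proof
    assume h: "\<tau> * (cmod (p + q))^2 = 1"
    have "g * (p + q) = p * q * ((p + q) * cnj (p + q))"
      unfolding g_def complex_norm_square by (simp add: algebra_simps)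
    then have G: "g * (p + q) = p * q * of_real ((cmod (p + q))^2)"
      by (simp only: complex_norm_square)
    have "s * (p + q) = of_real \<tau> * (g * (p + q))" unfolding sg by (simp add: mult.assoc)
    also have "\<dots> = p * q * of_real (\<tau> * (cmod (p + q))^2)" unfolding G of_real_mult by (simp add: mult_ac)
    finally have "s * (p + q) = p * q" unfolding h by simp
    moreover have "A - S = - s" "B - S = p - s" "C - S = q - s" unfolding s_def p_def q_def by simp_all
    ultimately show ?thesis by (simp only:) (simp add: algebra_simps power2_eq_square)
  next
    assume far: "orient B C S * orient B C Oc \<le> 0"
    have "cross p s = \<tau> * (cmod q)^2 * cross p p + \<tau> * (cmod p)^2 * cross p q"
      "cross q s = \<tau> * (cmod p)^2 * cross q q + \<tau> * (cmod q)^2 * cross q p"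
      unfolding sg g_def cross_def by (simp_all add: algebra_simps)
    moreover have "cross q p = - cross p q" by (simp add: cross_def algebra_simps)
    moreover have "\<tau> > 0" unfolding \<tau>_def using t ap by simp
    ultimately have "cross p s \<noteq> 0" "cross q s \<noteq> 0" using cpq ap by simp_all
    then have "S \<noteq> B" "S \<noteq> C" unfolding s_def p_def q_def by auto
    with arc far show ?thesis by simp
  qed
qed

text \<open>With E the midpoint of BC, u = A - E and w = B - E, both constructions of M_A give
  M_A = E + (|w|^2 / |u|^2) u. Below, E is the origin and q the relevant circumcentre.\<close>

lemma second_inter_median_coeff:
  fixes u w q :: complex
  assumes "cmod (q - u) = cmod (q - w)" "cmod (q - w) = cmod (q + w)" "u \<noteq> 0"
  shows "2 * inner (u - q) (- u) / inner (- u) (- u) = - 1 - (cmod w)^2 / (cmod u)^2"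
proof -
  have "inner (q - u) (q - u) = inner (q - w) (q - w)" "inner (q - w) (q - w) = inner (q + w) (q + w)"
    using assms(1,2) by (metis power2_norm_eq_inner)+
  then have b: "inner q q - 2 * inner q u + inner u u = inner q q - 2 * inner q w + inner w w"
    "inner q w = 0"
    by (simp_all add: inner_diff_left inner_diff_right inner_add_left inner_add_right inner_commute)
  have "2 * inner (u - q) (- u) = - 2 * inner u u + 2 * inner q u"
    by (simp add: inner_diff_left inner_diff_right inner_commute algebra_simps)
  also have "\<dots> = - inner u u - inner w w" using b by simp
  finally have "2 * inner (u - q) (- u) / inner (- u) (- u) = (- inner u u - inner w w) / inner u u" by simp
  also have "\<dots> = - 1 - inner w w / inner u u" using assms(3) by (simp add: field_simps)
  finally show ?thesis by (simp add: power2_norm_eq_inner)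
qed

lemma second_inter_median_acute:
  fixes E u w q :: complex
  assumes "cmod (q - u) = cmod (q - w)" "cmod (q - w) = cmod (q + w)" "u \<noteq> 0"
  shows "second_inter (E + u) (- u) (E + q) = E - of_real ((cmod w)^2 / (cmod u)^2) * u"
proof -
  have "second_inter (E + u) (- u) (E + q) = E + u + (2 * inner (u - q) (- u) / inner (- u) (- u)) *\<^sub>R u"
    unfolding second_inter_def by (simp add: algebra_simps)
  then show ?thesis
    unfolding second_inter_median_coeff[OF assms] by (simp add: scaleR_conv_of_real algebra_simps)
qed

lemma second_inter_median_obtuse:
  fixes E u w q :: complex
  assumes "cmod (q + u) = cmod (q - w)" "cmod (q - w) = cmod (q + w)" "u \<noteq> 0"
  shows "second_inter (E - u) u (E + q) = E + of_real ((cmod w)^2 / (cmod u)^2) * u"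
proof -
  have "cmod (- q - u) = cmod (q + u)" "cmod (- q - w) = cmod (q + w)" "cmod (- q + w) = cmod (q - w)"
    by (metis minus_diff_eq norm_minus_cancel diff_minus_eq_add add.commute uminus_add_conv_diff)+
  with assms have "cmod (- q - u) = cmod (- q - w)" "cmod (- q - w) = cmod (- q + w)" by simp_all
  note coeff = second_inter_median_coeff[OF this assms(3)]
  have "second_inter (E - u) u (E + q) = E - u - (2 * inner (- u - q) u / inner u u) *\<^sub>R u"
    unfolding second_inter_def by (simp add: algebra_simps)
  also have "2 * inner (- u - q) u / inner u u = 2 * inner (u - (- q)) (- u) / inner (- u) (- u)"
    by (simp add: inner_diff_left inner_add_left inner_commute algebra_simps)
  finally show ?thesis unfolding coeff by (simp add: scaleR_conv_of_real algebra_simps)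
qed

lemma point_on_segment_at_dist:
  assumes "M \<in> closed_segment (E + u) E" "dist E M = \<rho> * cmod u" "\<rho> \<ge> 0" "u \<noteq> 0"
  shows "M = E + of_real \<rho> * u"
proof -
  obtain t where t: "t \<le> 1" "M = (1 - t) *\<^sub>R (E + u) + t *\<^sub>R E"
    using assms(1) unfolding closed_segment_def by auto
  then have M: "M = E + of_real (1 - t) * u" by (simp add: scaleR_conv_of_real algebra_simps)
  have "dist E M = cmod (of_real (1 - t) * u)" unfolding M by (simp add: dist_norm del: of_real_diff)
  also have "\<dots> = (1 - t) * cmod u" using t(1) by (simp only: norm_mult norm_of_real)
  finally have "dist E M = (1 - t) * cmod u" .
  then have "1 - t = \<rho>" using assms(2,4) by simp
  then show ?thesis using M by simp
qed

lemma median_nonzero: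
  assumes "nondeg_triangle A B C"
  shows "A - (B + C) / 2 \<noteq> 0"
proof
  assume "A - (B + C) / 2 = 0"
  then have ca: "C - A = - (B - A)" by (simp add: field_simps)
  have "cross (B - A) (C - A) = 0" unfolding ca by (simp add: cross_def algebra_simps)
  with assms show False unfolding nondeg_triangle_iff_cross by simp
qed

lemma M_point_eq:
  assumes "is_M_point M A B C" "nondeg_triangle A B C"
  defines "E \<equiv> (B + C) / 2"
  shows "M = E + of_real ((cmod (B - E))^2 / (cmod (A - E))^2) * (A - E)"
proof -
  define u w \<rho> where "u = A - E" and "w = B - E" and "\<rho> = (cmod w)^2 / (cmod u)^2"
  have u0: "u \<noteq> 0" using median_nonzero[OF assms(2)] unfolding u_def E_def .
  have AE: "A = E + u" and BE: "B = E + w" and CE: "C = E - w"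
    unfolding u_def w_def E_def by (simp_all add: field_simps)
  have "M = E + of_real \<rho> * u"
    using assms(1) unfolding is_M_point_def Let_def E_def[symmetric]
  proof (elim disjE conjE exE)
    fix Oc F
    assume cc: "is_circumcenter Oc A B C" and F: "F = second_inter A (E - A) Oc"
      and seg: "M \<in> closed_segment A E" and dist: "dist E M = dist E F"
    have "cmod (Oc - E - u) = cmod (Oc - E - w)" "cmod (Oc - E - w) = cmod (Oc - E + w)"
      using cc unfolding is_circumcenter_def AE BE CE dist_norm by (simp_all add: norm_minus_commute algebra_simps)
    from second_inter_median_acute[OF this u0, of E] have "F = E - of_real \<rho> * u"
      unfolding F AE \<rho>_def by simp
    moreover have \<rho>: "\<rho> \<ge> 0" unfolding \<rho>_def by simp
    ultimately have "dist E M = \<rho> * cmod u" using dist by (simp add: dist_norm norm_mult)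
    with seg \<rho> u0 show ?thesis unfolding AE using point_on_segment_at_dist by blast
  next
    fix F Oc'
    assume F: "F = B + C - A" and cc: "is_circumcenter Oc' F B C" and M: "M = second_inter F (E - F) Oc'"
    have FE: "F = E - u" unfolding F AE BE CE by simp
    have "cmod (Oc' - E + u) = cmod (Oc' - E - w)" "cmod (Oc' - E - w) = cmod (Oc' - E + w)"
      using cc unfolding is_circumcenter_def FE BE CE dist_norm by (simp_all add: norm_minus_commute algebra_simps)
    from second_inter_median_obtuse[OF this u0, of E] show ?thesis
      unfolding M FE \<rho>_def by simp
  qed
  then show ?thesis unfolding \<rho>_def u_def w_def .
qed

lemma median_point_cross_identities:
  fixes u w :: complex and \<rho> :: real
  assumes hr: "\<rho> * (cmod u)^2 = (cmod w)^2"
  defines "a \<equiv> of_real (1 - \<rho>) * u" and "b \<equiv> w - of_real \<rho> * u" and "c \<equiv> - w - of_real \<rho> * u"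
  shows "(cross b c)^2 * (cmod a)^2 * (cmod (a - b))^2 = (cross c a)^2 * (cmod b)^2 * (cmod (b - c))^2"
    and "(cross b c)^2 * (cmod a)^2 * (cmod (c - a))^2 = (cross a b)^2 * (cmod c)^2 * (cmod (b - c))^2"
proof -
  obtain u1 u2 where u: "u = Complex u1 u2" by (metis complex.exhaust)
  obtain w1 w2 where w: "w = Complex w1 w2" by (metis complex.exhaust)
  have h: "\<rho> * (u1^2 + u2^2) = w1^2 + w2^2" using hr unfolding u w cmod_power2 by simp
  define X U Dm Dp where "X = u1 * w2 - u2 * w1" and "U = u1^2 + u2^2"
    and "Dm = (u1 - w1)^2 + (u2 - w2)^2" and "Dp = (u1 + w1)^2 + (u2 + w2)^2"
  have cross: "cross b c = 2 * \<rho> * X" "cross c a = (1 - \<rho>) * X" "cross a b = (1 - \<rho>) * X"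
    unfolding a_def b_def c_def u w X_def by (simp_all add: cross_def algebra_simps)
  have norms: "(cmod a)^2 = (1 - \<rho>)^2 * U" "(cmod (a - b))^2 = Dm" "(cmod (c - a))^2 = Dp"
    unfolding a_def b_def c_def u w U_def Dm_def Dp_def cmod_power2
    by (simp_all add: algebra_simps power2_eq_square)
  have "(cmod b)^2 = (w1 - \<rho> * u1)^2 + (w2 - \<rho> * u2)^2"
    "(cmod c)^2 = (- w1 - \<rho> * u1)^2 + (- w2 - \<rho> * u2)^2"
    "(cmod (b - c))^2 = (2 * w1)^2 + (2 * w2)^2"
    unfolding b_def c_def u w cmod_power2 by simp_all
  moreover have "(w1 - \<rho> * u1)^2 + (w2 - \<rho> * u2)^2 = \<rho> * Dm"
    "(- w1 - \<rho> * u1)^2 + (- w2 - \<rho> * u2)^2 = \<rho> * Dp"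
    "(2 * w1)^2 + (2 * w2)^2 = 4 * \<rho> * U"
    unfolding Dm_def Dp_def U_def using h by algebra+
  ultimately have norms': "(cmod b)^2 = \<rho> * Dm" "(cmod c)^2 = \<rho> * Dp" "(cmod (b - c))^2 = 4 * \<rho> * U"
    by simp_all
  show "(cross b c)^2 * (cmod a)^2 * (cmod (a - b))^2 = (cross c a)^2 * (cmod b)^2 * (cmod (b - c))^2"
    "(cross b c)^2 * (cmod a)^2 * (cmod (c - a))^2 = (cross a b)^2 * (cmod c)^2 * (cmod (b - c))^2"
    unfolding cross norms norms' by (simp_all add: algebra_simps power2_eq_square)
qed

lemma M_point_ratios:
  assumes hm: "is_M_point M A B C" and nd: "nondeg_triangle A B C"
  defines "x \<equiv> A - M" and "y \<equiv> B - M" and "z \<equiv> C - M"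
  shows "\<exists>\<sigma>. \<bar>cross y z\<bar> * cmod x = \<sigma> * dist B C \<and> \<bar>cross z x\<bar> * cmod y = \<sigma> * dist A B
    \<and> \<bar>cross x y\<bar> * cmod z = \<sigma> * dist C A"
proof -
  define E u w \<rho> where "E = (B + C) / 2" and "u = A - E" and "w = B - E" and "\<rho> = (cmod w)^2 / (cmod u)^2"
  have "u \<noteq> 0" using median_nonzero[OF nd] unfolding u_def E_def .
  then have hr: "\<rho> * (cmod u)^2 = (cmod w)^2" unfolding \<rho>_def by simp
  have M: "M = E + of_real \<rho> * u" using M_point_eq[OF hm nd] unfolding \<rho>_def u_def w_def E_def .
  have "x = of_real (1 - \<rho>) * u" "y = w - of_real \<rho> * u" "z = - w - of_real \<rho> * u"
    unfolding x_def y_def z_def M u_def w_def E_def by (simp_all add: algebra_simps field_simps)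
  note sq = median_point_cross_identities[OF hr, folded this]
  have dists: "dist B C = cmod (y - z)" "dist A B = cmod (x - y)" "dist C A = cmod (z - x)"
    unfolding x_def y_def z_def dist_norm by simp_all
  have "y \<noteq> z" using nd unfolding nondeg_triangle_def y_def z_def by auto
  moreover have "(cross y z * cmod x * cmod (x - y))^2 = (cross z x * cmod y * cmod (y - z))^2"
    "(cross y z * cmod x * cmod (z - x))^2 = (cross x y * cmod z * cmod (y - z))^2"
    using sq by (simp_all add: power_mult_distrib)
  then have "\<bar>cross y z\<bar> * cmod x * cmod (x - y) = \<bar>cross z x\<bar> * cmod y * cmod (y - z)"
    "\<bar>cross y z\<bar> * cmod x * cmod (z - x) = \<bar>cross x y\<bar> * cmod z * cmod (y - z)"
    by (metis abs_mult abs_norm_cancel real_sqrt_abs)+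
  ultimately show ?thesis unfolding dists
    by (intro exI[of _ "\<bar>cross y z\<bar> * cmod x / cmod (y - z)"]) (auto simp: field_simps)
qed

lemma orthocentre_ratios:
  assumes "is_orthocenter H A B C"
  defines "x \<equiv> A - H" and "y \<equiv> B - H" and "z \<equiv> C - H"
  shows "\<exists>\<sigma>. \<bar>cross y z\<bar> * cmod x = \<sigma> * dist B C \<and> \<bar>cross z x\<bar> * cmod y = \<sigma> * dist C A
    \<and> \<bar>cross x y\<bar> * cmod z = \<sigma> * dist A B"
proof -
  have perp_identity: "(cross b c)^2 * (cmod a)^2 = (inner a b)^2 * (cmod (b - c))^2"
    if "inner a (b - c) = 0" for a b c :: complex
  proof -
    obtain a1 a2 b1 b2 c1 c2 where "a = Complex a1 a2" "b = Complex b1 b2" "c = Complex c1 c2"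
      by (metis complex.exhaust)
    moreover from that this have "a1 * (b1 - c1) + a2 * (b2 - c2) = 0"
      by (simp add: inner_complex_def)
    then have "(b1 * c2 - b2 * c1)^2 * (a1^2 + a2^2) = (a1 * b1 + a2 * b2)^2 * ((b1 - c1)^2 + (b2 - c2)^2)"
      by algebra
    ultimately show ?thesis by (simp add: cross_def inner_complex_def cmod_power2)
  qed
  have "inner x (y - z) = 0" "inner y (z - x) = 0" "inner z (x - y) = 0"
    using assms unfolding is_orthocenter_def x_def y_def z_def
    by (simp_all add: inner_diff_left inner_diff_right inner_commute algebra_simps)
  moreover have "inner y z = inner x y" "inner z x = inner x y"
    using calculation by (simp_all add: inner_diff_right inner_commute algebra_simps)
  ultimately have "(cross y z * cmod x)^2 = (inner x y * cmod (y - z))^2"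
    "(cross z x * cmod y)^2 = (inner x y * cmod (z - x))^2"
    "(cross x y * cmod z)^2 = (inner x y * cmod (x - y))^2"
    using perp_identity unfolding power_mult_distrib by metis+
  then have "\<bar>cross y z\<bar> * cmod x = \<bar>inner x y\<bar> * cmod (y - z)"
    "\<bar>cross z x\<bar> * cmod y = \<bar>inner x y\<bar> * cmod (z - x)"
    "\<bar>cross x y\<bar> * cmod z = \<bar>inner x y\<bar> * cmod (x - y)"
    by (metis abs_mult abs_norm_cancel real_sqrt_abs)+
  moreover have "dist B C = cmod (y - z)" "dist C A = cmod (z - x)" "dist A B = cmod (x - y)"
    unfolding x_def y_def z_def dist_norm by simp_all
  ultimately show ?thesis by metis
qed

section \<open>Chains of Miquel triangles\<close>

locale miquel_chain =
  fixes A B C :: "nat \<Rightarrow> complex" and P :: complex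
  assumes nondeg: "\<And>k. nondeg_triangle (A k) (B k) (C k)"
    and P_off: "\<And>k. \<not> on_line P (B k) (C k) \<and> \<not> on_line P (C k) (A k) \<and> \<not> on_line P (A k) (B k)"
    and chain: "\<And>k. miquel_triangle P (A k) (B k) (C k) (A (Suc k)) (B (Suc k)) (C (Suc k))"

lemma miquel_chain_rotate:
  assumes "miquel_chain A B C P"
  shows "miquel_chain B C A P"
proof -
  interpret miquel_chain A B C P by (fact assms)
  show ?thesis
  proof
    show "nondeg_triangle (B k) (C k) (A k)" for k
      using nondeg[of k] unfolding nondeg_triangle_def by (simp add: insert_commute)
    show "\<not> on_line P (C k) (A k) \<and> \<not> on_line P (A k) (B k) \<and> \<not> on_line P (B k) (C k)" for k
      using P_off by blast
    show "miquel_triangle P (B k) (C k) (A k) (B (Suc k)) (C (Suc k)) (A (Suc k))" for k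
      using chain unfolding miquel_triangle_def by blast
  qed
qed

context miquel_chain
begin

definition a :: "nat \<Rightarrow> complex" where "a k = A k - P"
definition b :: "nat \<Rightarrow> complex" where "b k = B k - P"
definition c :: "nat \<Rightarrow> complex" where "c k = C k - P"

lemma cross_nonzero: "cross (a k) (b k) \<noteq> 0" "cross (b k) (c k) \<noteq> 0" "cross (c k) (a k) \<noteq> 0"
  using P_off[of k] unfolding not_on_line_iff_cross a_def b_def c_def by auto

lemma nonzero: "a k \<noteq> 0" "b k \<noteq> 0" "c k \<noteq> 0" "a k \<noteq> b k" "b k \<noteq> c k" "c k \<noteq> a k"
  using cross_nonzero[of k] by auto

lemma triangle_cross_nonzero: "cross (b k - a k) (c k - a k) \<noteq> 0"
  using nondeg[of k] unfolding nondeg_triangle_iff_cross a_def b_def c_def by simp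

text \<open>The spiral factor taking the pedal triangle of P to the next triangle of the chain.\<close>

definition mu :: "nat \<Rightarrow> complex" where "mu k = a (Suc k) / foot (b k) (c k)"

lemma mu: "mu k \<noteq> 0" "a (Suc k) = mu k * foot (b k) (c k)" "b (Suc k) = mu k * foot (c k) (a k)"
  "c (Suc k) = mu k * foot (a k) (b k)"
proof -
  obtain \<mu> where "\<mu> \<noteq> 0" "a (Suc k) = \<mu> * foot (b k) (c k)" "b (Suc k) = \<mu> * foot (c k) (a k)"
    "c (Suc k) = \<mu> * foot (a k) (b k)"
    using miquel_triangle_spiral[OF _ _ _ chain] P_off unfolding a_def b_def c_def by blast
  moreover have "foot (b k) (c k) \<noteq> 0" using cross_nonzero(2) by (rule foot_nonzero)
  ultimately show "mu k \<noteq> 0" "a (Suc k) = mu k * foot (b k) (c k)" "b (Suc k) = mu k * foot (c k) (a k)"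
    "c (Suc k) = mu k * foot (a k) (b k)"
    unfolding mu_def by simp_all
qed

lemma two_step_product:
  "a (Suc (Suc k)) * a k * mu k = mu (Suc k) * b (Suc k) * c (Suc k)"
  "b (Suc (Suc k)) * b k * mu k = mu (Suc k) * c (Suc k) * a (Suc k)"
  "c (Suc (Suc k)) * c k * mu k = mu (Suc k) * a (Suc k) * b (Suc k)"
proof -
  have "foot (c k) (a k) \<noteq> foot (a k) (b k)" "foot (a k) (b k) \<noteq> foot (b k) (c k)"
    "foot (b k) (c k) \<noteq> foot (c k) (a k)"
    using nonzero[of "Suc k"] unfolding mu(2-4) by auto
  then have "foot (foot (c k) (a k)) (foot (a k) (b k)) = foot (c k) (a k) * foot (a k) (b k) / a k"
    "foot (foot (a k) (b k)) (foot (b k) (c k)) = foot (a k) (b k) * foot (b k) (c k) / b k"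
    "foot (foot (b k) (c k)) (foot (c k) (a k)) = foot (b k) (c k) * foot (c k) (a k) / c k"
    using nonzero[of k] by (auto intro!: foot_foot)
  then show "a (Suc (Suc k)) * a k * mu k = mu (Suc k) * b (Suc k) * c (Suc k)"
    "b (Suc (Suc k)) * b k * mu k = mu (Suc k) * c (Suc k) * a (Suc k)"
    "c (Suc (Suc k)) * c k * mu k = mu (Suc k) * a (Suc k) * b (Suc k)"
    unfolding mu(2-4)[of "Suc k"] mu(2-4)[of k] foot_mult using nonzero[of k]
    by (simp_all add: field_simps)
qed

lemma three_step_spiral:
  "\<exists>L. L \<noteq> 0 \<and> a (k + 3) = L * a k \<and> b (k + 3) = L * b k \<and> c (k + 3) = L * c k"
proof -
  define a0 b0 c0 a1 b1 c1 a2 b2 c2 a3 b3 c3 m0 m1 m2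
    where "a0 = a k" "b0 = b k" "c0 = c k" "a1 = a (Suc k)" "b1 = b (Suc k)" "c1 = c (Suc k)"
      "a2 = a (Suc (Suc k))" "b2 = b (Suc (Suc k))" "c2 = c (Suc (Suc k))"
      "a3 = a (Suc (Suc (Suc k)))" "b3 = b (Suc (Suc (Suc k)))" "c3 = c (Suc (Suc (Suc k)))"
      "m0 = mu k" "m1 = mu (Suc k)" "m2 = mu (Suc (Suc k))"
  note defs = this
  have nz: "a0 \<noteq> 0" "b0 \<noteq> 0" "c0 \<noteq> 0" "a1 \<noteq> 0" "b1 \<noteq> 0" "c1 \<noteq> 0" "m0 \<noteq> 0" "m1 \<noteq> 0" "m2 \<noteq> 0"
    using nonzero mu(1) unfolding defs by auto
  have step2: "a2 = m1 * b1 * c1 / (a0 * m0)" "b2 = m1 * c1 * a1 / (b0 * m0)" "c2 = m1 * a1 * b1 / (c0 * m0)"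
    using two_step_product[of k] nz unfolding defs by (auto simp: field_simps)
  have "a3 = m2 * b2 * c2 / (a1 * m1)" "b3 = m2 * c2 * a2 / (b1 * m1)" "c3 = m2 * a2 * b2 / (c1 * m1)"
    using two_step_product[of "Suc k"] nz unfolding defs by (auto simp: field_simps)
  then have "a3 = L * a0" "b3 = L * b0" "c3 = L * c0" "L \<noteq> 0"
    if "L = m2 * m1 * a1 * b1 * c1 / (a0 * b0 * c0 * m0^2)" for L
    unfolding step2 that using nz by (simp_all add: field_simps power2_eq_square)
  moreover have "k + 3 = Suc (Suc (Suc k))" by simp
  ultimately show ?thesis unfolding defs by metis
qed

lemma spiral_period:
  "\<exists>L. L \<noteq> 0 \<and> a (3 * m + r) = L * a r \<and> b (3 * m + r) = L * b r \<and> c (3 * m + r) = L * c r"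
proof (induction m)
  case 0 show ?case by (intro exI[of _ 1]) simp
next
  case (Suc m)
  then obtain L where L: "L \<noteq> 0" "a (3 * m + r) = L * a r" "b (3 * m + r) = L * b r" "c (3 * m + r) = L * c r"
    by blast
  obtain L' where L': "L' \<noteq> 0" "a (3 * m + r + 3) = L' * a (3 * m + r)"
    "b (3 * m + r + 3) = L' * b (3 * m + r)" "c (3 * m + r + 3) = L' * c (3 * m + r)"
    using three_step_spiral by blast
  have e: "3 * Suc m + r = 3 * m + r + 3" by simp
  show ?case unfolding e using L L' by (intro exI[of _ "L' * L"]) simp
qed

lemma similar_mod_3:
  assumes "tri_sim (A 0) (B 0) (C 0) (A r) (B r) (C r)" "k mod 3 = r"
  shows "tri_sim (A 0) (B 0) (C 0) (A k) (B k) (C k)"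
proof -
  have k: "k = 3 * (k div 3) + r" using assms(2) by (metis div_mult_mod_eq mult.commute)
  obtain L where "L \<noteq> 0" "a k = L * a r" "b k = L * b r" "c k = L * c r"
    using spiral_period[of "k div 3" r] unfolding k[symmetric] by blast
  moreover from this have "A k = P + L * (A r - P)" "B k = P + L * (B r - P)" "C k = P + L * (C r - P)"
    unfolding a_def b_def c_def by (simp_all add: algebra_simps)
  ultimately show ?thesis using tri_sim_spiral[OF assms(1)] by simp
qed

definition side_factor :: "nat \<Rightarrow> real" where
  "side_factor k = cmod (mu k) * \<bar>cross (b k - a k) (c k - a k)\<bar>
    / (cmod (a k - c k) * cmod (b k - a k) * cmod (c k - b k))"

lemma side_factor_pos: "side_factor k > 0"
  unfolding side_factor_def using mu(1)[of k] triangle_cross_nonzero[of k] nonzero[of k] by simp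

lemma dist_eq_norm: "dist (A k) (B k) = cmod (a k - b k)" "dist (B k) (C k) = cmod (b k - c k)"
  "dist (C k) (A k) = cmod (c k - a k)"
  unfolding a_def b_def c_def dist_norm by simp_all

lemma side_lengths_Suc:
  "dist (B (Suc k)) (C (Suc k)) = side_factor k * cmod (a k) * dist (B k) (C k)"
  "dist (C (Suc k)) (A (Suc k)) = side_factor k * cmod (b k) * dist (C k) (A k)"
  "dist (A (Suc k)) (B (Suc k)) = side_factor k * cmod (c k) * dist (A k) (B k)"
proof -
  have "cmod (b (Suc k) - c (Suc k)) = cmod (mu k) * cmod (foot (c k) (a k) - foot (a k) (b k))"
    "cmod (c (Suc k) - a (Suc k)) = cmod (mu k) * cmod (foot (a k) (b k) - foot (b k) (c k))"
    "cmod (a (Suc k) - b (Suc k)) = cmod (mu k) * cmod (foot (b k) (c k) - foot (c k) (a k))"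
    unfolding mu(2-4) by (metis norm_mult right_diff_distrib)+
  moreover have "cmod (foot (c k) (a k) - foot (a k) (b k))
      = \<bar>cross (b k - a k) (c k - a k)\<bar> * cmod (a k) / (cmod (a k - c k) * cmod (b k - a k))"
    "cmod (foot (a k) (b k) - foot (b k) (c k))
      = \<bar>cross (b k - a k) (c k - a k)\<bar> * cmod (b k) / (cmod (b k - a k) * cmod (c k - b k))"
    "cmod (foot (b k) (c k) - foot (c k) (a k))
      = \<bar>cross (b k - a k) (c k - a k)\<bar> * cmod (c k) / (cmod (c k - b k) * cmod (a k - c k))"
    using norm_foot_diff[of "a k" "b k" "c k"] norm_foot_diff[of "b k" "c k" "a k"]
      norm_foot_diff[of "c k" "a k" "b k"] nonzero[of k]
    unfolding cross_cyclic by auto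
  moreover have "cmod (a k - c k) > 0" "cmod (b k - a k) > 0" "cmod (c k - b k) > 0"
    using nonzero[of k] by auto
  ultimately show "dist (B (Suc k)) (C (Suc k)) = side_factor k * cmod (a k) * dist (B k) (C k)"
    "dist (C (Suc k)) (A (Suc k)) = side_factor k * cmod (b k) * dist (C k) (A k)"
    "dist (A (Suc k)) (B (Suc k)) = side_factor k * cmod (c k) * dist (A k) (B k)"
    unfolding dist_eq_norm side_factor_def by (simp_all add: norm_minus_commute field_simps)
qed

lemma side_lengths_2:
  defines "F \<equiv> side_factor 1 * side_factor 0 * cmod (mu 0)"
  shows "dist (B 2) (C 2) = F * \<bar>cross (b 0) (c 0)\<bar> * cmod (a 0)"
    "dist (C 2) (A 2) = F * \<bar>cross (c 0) (a 0)\<bar> * cmod (b 0)"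
    "dist (A 2) (B 2) = F * \<bar>cross (a 0) (b 0)\<bar> * cmod (c 0)"
proof -
  have "cmod (a 1) = cmod (mu 0) * (\<bar>cross (b 0) (c 0)\<bar> / cmod (c 0 - b 0))"
    "cmod (b 1) = cmod (mu 0) * (\<bar>cross (c 0) (a 0)\<bar> / cmod (a 0 - c 0))"
    "cmod (c 1) = cmod (mu 0) * (\<bar>cross (a 0) (b 0)\<bar> / cmod (b 0 - a 0))"
    using mu(2-4)[of 0] by (simp_all add: norm_mult norm_foot)
  moreover have "cmod (a 0 - c 0) > 0" "cmod (b 0 - a 0) > 0" "cmod (c 0 - b 0) > 0"
    using nonzero[of 0] by auto
  moreover note side_lengths_Suc[of 1, simplified] side_lengths_Suc[of 0, simplified]
  ultimately show "dist (B 2) (C 2) = F * \<bar>cross (b 0) (c 0)\<bar> * cmod (a 0)"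
    "dist (C 2) (A 2) = F * \<bar>cross (c 0) (a 0)\<bar> * cmod (b 0)"
    "dist (A 2) (B 2) = F * \<bar>cross (a 0) (b 0)\<bar> * cmod (c 0)"
    unfolding F_def dist_eq_norm numeral_2_eq_2
    by (simp_all add: norm_minus_commute field_simps)
qed

lemma similar_step1_if_circumcentre:
  assumes "is_circumcenter P (A 0) (B 0) (C 0)"
  shows "tri_sim (A 0) (B 0) (C 0) (A 1) (B 1) (C 1)"
proof -
  have "cmod (a 0) = cmod (b 0)" "cmod (c 0) = cmod (b 0)"
    using assms unfolding is_circumcenter_def a_def b_def c_def dist_norm by (simp_all add: norm_minus_commute)
  then have "sim_labelled (A 0) (B 0) (C 0) (A 1) (B 1) (C 1)"
    unfolding sim_labelled_def using side_lengths_Suc[of 0] side_factor_pos[of 0] nonzero[of 0]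
    by (intro exI[of _ "side_factor 0 * cmod (b 0)"]) (simp add: dist_commute)
  then show ?thesis unfolding tri_sim_def by blast
qed

lemma similar_step1_if_sq:
  assumes "(A 0 - P)^2 = (B 0 - P) * (C 0 - P)"
  shows "tri_sim (A 0) (B 0) (C 0) (A 1) (B 1) (C 1)"
proof -
  have "b 0 * (c 0 - a 0) = a 0 * (a 0 - b 0)" "c 0 * (a 0 - b 0) = a 0 * (c 0 - a 0)"
    using assms unfolding a_def b_def c_def by (simp_all add: algebra_simps power2_eq_square)
  then have "cmod (b 0) * dist (C 0) (A 0) = cmod (a 0) * dist (A 0) (B 0)"
    "cmod (c 0) * dist (A 0) (B 0) = cmod (a 0) * dist (C 0) (A 0)"
    unfolding dist_eq_norm by (metis norm_mult norm_minus_commute)+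
  then have "sim_labelled (A 0) (B 0) (C 0) (A 1) (C 1) (B 1)"
    unfolding sim_labelled_def using side_lengths_Suc[of 0] side_factor_pos[of 0] nonzero[of 0]
    by (intro exI[of _ "side_factor 0 * cmod (a 0)"]) (simp add: dist_commute)
  then show ?thesis unfolding tri_sim_def by blast
qed

lemma similar_step1:
  assumes "is_circumcenter P (A 0) (B 0) (C 0) \<or> is_S_point P (A 0) (B 0) (C 0) \<or>
    is_S_point P (B 0) (C 0) (A 0) \<or> is_S_point P (C 0) (A 0) (B 0)"
  shows "tri_sim (A 0) (B 0) (C 0) (A 1) (B 1) (C 1)"
proof -
  have BCA: "miquel_chain B C A P" and CAB: "miquel_chain C A B P"
    using miquel_chain_rotate miquel_chain_axioms by blast+
  from assms show ?thesis
  proof (elim disjE)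
    assume "is_S_point P (A 0) (B 0) (C 0)"
    from S_point_relation[OF this nondeg] show ?thesis by (rule similar_step1_if_sq)
  next
    assume "is_S_point P (B 0) (C 0) (A 0)"
    from S_point_relation[OF this miquel_chain.nondeg[OF BCA]] show ?thesis
      by (rule tri_sim_rotate[OF miquel_chain.similar_step1_if_sq[OF BCA]])
  next
    assume "is_S_point P (C 0) (A 0) (B 0)"
    from S_point_relation[OF this miquel_chain.nondeg[OF CAB]] show ?thesis
      by (rule tri_sim_rotate[OF tri_sim_rotate[OF miquel_chain.similar_step1_if_sq[OF CAB]]])
  qed (rule similar_step1_if_circumcentre)
qed

lemma similar_step2_if_ratios:
  assumes "\<exists>\<sigma>. \<bar>cross (B 0 - P) (C 0 - P)\<bar> * cmod (A 0 - P) = \<sigma> * dist (B 0) (C 0)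
      \<and> \<bar>cross (C 0 - P) (A 0 - P)\<bar> * cmod (B 0 - P) = \<sigma> * d1
      \<and> \<bar>cross (A 0 - P) (B 0 - P)\<bar> * cmod (C 0 - P) = \<sigma> * d2"
    and "d1 = dist (C 0) (A 0) \<and> d2 = dist (A 0) (B 0) \<or> d1 = dist (A 0) (B 0) \<and> d2 = dist (C 0) (A 0)"
  shows "tri_sim (A 0) (B 0) (C 0) (A 2) (B 2) (C 2)"
proof -
  obtain \<sigma> where ratios: "\<bar>cross (B 0 - P) (C 0 - P)\<bar> * cmod (A 0 - P) = \<sigma> * dist (B 0) (C 0)"
    "\<bar>cross (C 0 - P) (A 0 - P)\<bar> * cmod (B 0 - P) = \<sigma> * d1"
    "\<bar>cross (A 0 - P) (B 0 - P)\<bar> * cmod (C 0 - P) = \<sigma> * d2"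
    using assms(1) by blast
  have "\<bar>cross (b 0) (c 0)\<bar> * cmod (a 0) > 0" "dist (B 0) (C 0) > 0"
    using cross_nonzero[of 0] nonzero[of 0] unfolding dist_eq_norm by simp_all
  then have "\<sigma> > 0" using ratios(1) unfolding a_def b_def c_def by (simp add: zero_less_mult_iff)
  define r where "r = side_factor 1 * side_factor 0 * cmod (mu 0) * \<sigma>"
  have r: "r > 0" unfolding r_def using side_factor_pos mu(1) \<open>\<sigma> > 0\<close> by simp
  have dists: "dist (B 2) (C 2) = r * dist (B 0) (C 0)" "dist (C 2) (A 2) = r * d1" "dist (A 2) (B 2) = r * d2"
    unfolding side_lengths_2 r_def using ratios unfolding a_def b_def c_def
    by (simp_all add: algebra_simps)
  from assms(2) show ?thesis
  proof (elim disjE conjE)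
    assume "d1 = dist (C 0) (A 0)" "d2 = dist (A 0) (B 0)"
    then have "sim_labelled (A 0) (B 0) (C 0) (A 2) (B 2) (C 2)"
      unfolding sim_labelled_def using r dists by (intro exI[of _ r]) simp
    then show ?thesis unfolding tri_sim_def by blast
  next
    assume "d1 = dist (A 0) (B 0)" "d2 = dist (C 0) (A 0)"
    then have "sim_labelled (A 0) (B 0) (C 0) (A 2) (C 2) (B 2)"
      unfolding sim_labelled_def using r dists by (intro exI[of _ r]) (simp add: dist_commute)
    then show ?thesis unfolding tri_sim_def by blast
  qed
qed

lemma similar_step2:
  assumes "is_orthocenter P (A 0) (B 0) (C 0) \<or> is_M_point P (A 0) (B 0) (C 0) \<or>
    is_M_point P (B 0) (C 0) (A 0) \<or> is_M_point P (C 0) (A 0) (B 0)"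
  shows "tri_sim (A 0) (B 0) (C 0) (A 2) (B 2) (C 2)"
proof -
  have BCA: "miquel_chain B C A P" and CAB: "miquel_chain C A B P"
    using miquel_chain_rotate miquel_chain_axioms by blast+
  from assms show ?thesis
  proof (elim disjE)
    assume "is_orthocenter P (A 0) (B 0) (C 0)"
    from orthocentre_ratios[OF this] show ?thesis by (rule similar_step2_if_ratios) simp
  next
    assume "is_M_point P (A 0) (B 0) (C 0)"
    from M_point_ratios[OF this nondeg] show ?thesis by (rule similar_step2_if_ratios) simp
  next
    assume "is_M_point P (B 0) (C 0) (A 0)"
    from M_point_ratios[OF this miquel_chain.nondeg[OF BCA]]
    have "tri_sim (B 0) (C 0) (A 0) (B 2) (C 2) (A 2)"
      by (rule miquel_chain.similar_step2_if_ratios[OF BCA]) simp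
    then show ?thesis by (rule tri_sim_rotate)
  next
    assume "is_M_point P (C 0) (A 0) (B 0)"
    from M_point_ratios[OF this miquel_chain.nondeg[OF CAB]]
    have "tri_sim (C 0) (A 0) (B 0) (C 2) (A 2) (B 2)"
      by (rule miquel_chain.similar_step2_if_ratios[OF CAB]) simp
    then show ?thesis by (rule tri_sim_rotate[OF tri_sim_rotate])
  qed
qed

definition cyclic_copy :: "nat \<Rightarrow> bool" where
  "cyclic_copy k \<longleftrightarrow> (\<exists>L. L \<noteq> 0 \<and>
    ((a k = L * a 0 \<and> b k = L * b 0 \<and> c k = L * c 0) \<or>
     (a k = L * b 0 \<and> b k = L * c 0 \<and> c k = L * a 0) \<or>
     (a k = L * c 0 \<and> b k = L * a 0 \<and> c k = L * b 0)))"

lemma cyclic_copy_0: "cyclic_copy 0"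
  unfolding cyclic_copy_def by (intro exI[of _ 1]) simp

lemma cyclic_copy_Suc:
  assumes "cyclic_copy k" "\<kappa> \<noteq> 0"
    and "(a (Suc k) = \<kappa> * b k \<and> b (Suc k) = \<kappa> * c k \<and> c (Suc k) = \<kappa> * a k) \<or>
      (a (Suc k) = \<kappa> * c k \<and> b (Suc k) = \<kappa> * a k \<and> c (Suc k) = \<kappa> * b k)"
  shows "cyclic_copy (Suc k)"
proof -
  obtain L where "L \<noteq> 0" and "(a k = L * a 0 \<and> b k = L * b 0 \<and> c k = L * c 0) \<or>
     (a k = L * b 0 \<and> b k = L * c 0 \<and> c k = L * a 0) \<or>
     (a k = L * c 0 \<and> b k = L * a 0 \<and> c k = L * b 0)"
    using assms(1) unfolding cyclic_copy_def by blast
  then show ?thesis unfolding cyclic_copy_def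
    using assms(2,3) by (intro exI[of _ "\<kappa> * L"]) auto
qed

lemma tri_sim_if_cyclic_copy:
  assumes "cyclic_copy k"
  shows "tri_sim (A 0) (B 0) (C 0) (A k) (B k) (C k)"
proof -
  obtain L where L: "L \<noteq> 0" and cases: "(a k = L * a 0 \<and> b k = L * b 0 \<and> c k = L * c 0) \<or>
     (a k = L * b 0 \<and> b k = L * c 0 \<and> c k = L * a 0) \<or>
     (a k = L * c 0 \<and> b k = L * a 0 \<and> c k = L * b 0)"
    using assms unfolding cyclic_copy_def by blast
  have spiral: "X = P + L * (Y - P)" if "X - P = L * (Y - P)" for X Y using that by (simp add: algebra_simps)
  note sims = tri_sim_spiral[OF tri_sim_refl L] tri_sim_spiral[OF tri_sim_rotate_left L]
    tri_sim_spiral[OF tri_sim_rotate_right L]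
  from cases show ?thesis
    unfolding a_def b_def c_def by (elim disjE conjE) (metis sims spiral)+
qed

lemma first_brocard_chain:
  assumes "first_brocard P (A 0) (B 0) (C 0)"
  shows "first_brocard P (A k) (B k) (C k) \<and> cyclic_copy k"
proof (induction k)
  case 0 show ?case using assms cyclic_copy_0 by simp
next
  case (Suc k)
  then have fb: "first_brocard P (A k) (B k) (C k)" and copy: "cyclic_copy k" by auto
  obtain \<rho> where \<rho>: "foot (b k) (c k) = \<rho> * b k" "foot (c k) (a k) = \<rho> * c k" "foot (a k) (b k) = \<rho> * a k"
    using first_brocard_foot[OF fb] cross_nonzero unfolding a_def b_def c_def by blast
  have "\<rho> \<noteq> 0" using \<rho>(1) foot_nonzero[OF cross_nonzero(2)] by auto
  then have \<kappa>: "mu k * \<rho> \<noteq> 0" using mu(1) by simp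
  have next_tri: "a (Suc k) = (mu k * \<rho>) * b k" "b (Suc k) = (mu k * \<rho>) * c k" "c (Suc k) = (mu k * \<rho>) * a k"
    using mu(2-4)[of k] \<rho> by simp_all
  then have "A (Suc k) = P + (mu k * \<rho>) * (B k - P)" "B (Suc k) = P + (mu k * \<rho>) * (C k - P)"
    "C (Suc k) = P + (mu k * \<rho>) * (A k - P)"
    unfolding a_def b_def c_def by (simp_all add: algebra_simps)
  then have "first_brocard P (A (Suc k)) (B (Suc k)) (C (Suc k))"
    using first_brocard_spiral[OF fb \<kappa>] by simp
  with cyclic_copy_Suc[OF copy \<kappa>] next_tri show ?case by blast
qed

lemma second_brocard_chain:
  assumes "second_brocard P (A 0) (B 0) (C 0)"
  shows "second_brocard P (A k) (B k) (C k) \<and> cyclic_copy k"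
proof (induction k)
  case 0 show ?case using assms cyclic_copy_0 by simp
next
  case (Suc k)
  then have sb: "second_brocard P (A k) (B k) (C k)" and copy: "cyclic_copy k" by auto
  obtain \<rho> where \<rho>: "foot (b k) (c k) = \<rho> * c k" "foot (c k) (a k) = \<rho> * a k" "foot (a k) (b k) = \<rho> * b k"
    using second_brocard_foot[OF sb] cross_nonzero unfolding a_def b_def c_def by blast
  have "\<rho> \<noteq> 0" using \<rho>(1) foot_nonzero[OF cross_nonzero(2)] by auto
  then have \<kappa>: "mu k * \<rho> \<noteq> 0" using mu(1) by simp
  have next_tri: "a (Suc k) = (mu k * \<rho>) * c k" "b (Suc k) = (mu k * \<rho>) * a k" "c (Suc k) = (mu k * \<rho>) * b k"
    using mu(2-4)[of k] \<rho> by simp_all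
  then have "A (Suc k) = P + (mu k * \<rho>) * (C k - P)" "B (Suc k) = P + (mu k * \<rho>) * (A k - P)"
    "C (Suc k) = P + (mu k * \<rho>) * (B k - P)"
    unfolding a_def b_def c_def by (simp_all add: algebra_simps)
  then have "second_brocard P (A (Suc k)) (B (Suc k)) (C (Suc k))"
    using second_brocard_spiral[OF sb \<kappa>] by simp
  with cyclic_copy_Suc[OF copy \<kappa>] next_tri show ?case by blast
qed

end

theorem theorem15:
  fixes A B C :: "nat \<Rightarrow> complex" and P :: complex
  assumes nondeg: "\<And>k. nondeg_triangle (A k) (B k) (C k)"
    and P_off: "\<And>k. \<not> on_line P (B k) (C k) \<and> \<not> on_line P (C k) (A k) \<and> \<not> on_line P (A k) (B k)"
    and chain: "\<And>k. miquel_triangle P (A k) (B k) (C k) (A (Suc k)) (B (Suc k)) (C (Suc k))"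
  shows
    "(first_brocard P (A 0) (B 0) (C 0) \<longrightarrow>
        (\<forall>k. first_brocard P (A k) (B k) (C k)) \<and>
        (\<forall>k\<ge>1. tri_sim (A 0) (B 0) (C 0) (A k) (B k) (C k)))
   \<and> (second_brocard P (A 0) (B 0) (C 0) \<longrightarrow>
        (\<forall>k. second_brocard P (A k) (B k) (C k)) \<and>
        (\<forall>k\<ge>1. tri_sim (A 0) (B 0) (C 0) (A k) (B k) (C k)))
   \<and> ((is_circumcenter P (A 0) (B 0) (C 0) \<or> is_S_point P (A 0) (B 0) (C 0) \<or>
         is_S_point P (B 0) (C 0) (A 0) \<or> is_S_point P (C 0) (A 0) (B 0)) \<longrightarrow>
        (\<forall>k. k mod 3 = 0 \<or> k mod 3 = 1 \<longrightarrow> tri_sim (A 0) (B 0) (C 0) (A k) (B k) (C k)))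
   \<and> ((is_orthocenter P (A 0) (B 0) (C 0) \<or> is_M_point P (A 0) (B 0) (C 0) \<or>
         is_M_point P (B 0) (C 0) (A 0) \<or> is_M_point P (C 0) (A 0) (B 0)) \<longrightarrow>
        (\<forall>k. k mod 3 = 2 \<or> k mod 3 = 0 \<longrightarrow> tri_sim (A 0) (B 0) (C 0) (A k) (B k) (C k)))"
proof -
  interpret miquel_chain A B C P using assms by unfold_locales
  have mod_3_0: "k mod 3 = 0 \<Longrightarrow> tri_sim (A 0) (B 0) (C 0) (A k) (B k) (C k)" for k
    using similar_mod_3[OF tri_sim_refl] by simp
  note parts = first_brocard_chain second_brocard_chain tri_sim_if_cyclic_copy mod_3_0
    similar_mod_3[OF similar_step1] similar_mod_3[OF similar_step2]
  show ?thesis by (intro conjI impI allI) (use parts in metis)+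
qed

end
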